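(* Let $n$ be the number of vertices and let $\epsilon,\delta>0$ satisfy $e^{4\epsilon}\delta<1/(16n)$. Every $(\epsilon,\delta)$-differentially oblivious $(3/4,1/3)$-tester for connectivity in graphs with maximal degree $2$ (in the incidence lists model) runs in time $\Omega(\sqrt{n}/e^{2\epsilon})$.
   Context: Incidence lists model with degree bound $d$: a graph $G$ on vertex set $V$, $|V|=n$, of maximal degree at most $d$ is represented by $f_G:V\times[d]\to V\cup\{0\}$ where $f_G(v,i)$ is the $i$-th neighbor of $v$ ($0$ if it does not exist); the tester accesses the graph by querying (probing) this function. The distance between two $n$-vertex graphs is $\mathrm{dist}_d(G_1,G_2)=|\{(v,i):v\in V,i\in[d],f_{G_1}(v,i)\ne f_{G_2}(v,i)\}|/(dn)$, and $G$ is $\gamma$-far from a property (set of graphs of maximal degree $d$) ${\cal P}$ if its distance to every $n$-vertex graph in ${\cal P}$ exceeds $\gamma$. A $(\beta,\gamma)$-tester for ${\cal P}$ is a probabilistic algorithm that outputs $1$ with probability at least $\beta$ if $G\in{\cal P}$ and outputs $0$ with probability at least $\beta$ if $G$ is $\gamma$-far from ${\cal P}$. Here ${\cal P}$ is the set of connected graphs of maximal degree $2$. Two $n$-vertex graphs are neighbors if one is obtained from the other by changing the neighbors of exactly one vertex. The tester is $(\epsilon,\delta)$-differentially oblivious if for all neighboring graphs $G,G'$ and every set $S$ of access patterns, $\Pr[\mathsf{Access}(G)\in S]\le e^{\epsilon}\Pr[\mathsf{Access}(G')\in S]+\delta$, where $\mathsf{Access}(G)$ is the ordered sequence of memory accesses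 of the tester on $G$. *)

theory Defs
  imports "HOL-Probability.Probability"
begin

text \<open>Vertices are 1..n; the value 0 means "no neighbour". A graph is given by
its incidence function f :: nat => nat => nat, where f v i is the i-th
neighbour of v (v in 1..n, i in 1..d).\<close>

type_synonym inc_fun = "nat \<Rightarrow> nat \<Rightarrow> nat"

definition valid_graph :: "nat \<Rightarrow> nat \<Rightarrow> inc_fun \<Rightarrow> bool" where
  "valid_graph d n f \<longleftrightarrow>
     (\<forall>v i. (v \<notin> {1..n} \<or> i \<notin> {1..d}) \<longrightarrow> f v i = 0) \<and>
     (\<forall>v\<in>{1..n}. \<forall>i\<in>{1..d}. f v i \<le> n \<and> f v i \<noteq> v) \<and>
     (\<forall>v\<in>{1..n}. \<forall>i\<in>{1..d}. \<forall>j\<in>{1..d}. i \<noteq> j \<and> f v i \<noteq> 0 \<longrightarrow> f v i \<noteq> f v j) \<and>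
     (\<forall>v\<in>{1..n}. \<forall>i\<in>{1..d}. \<forall>j\<in>{1..d}. i \<le> j \<and> f v i = 0 \<longrightarrow> f v j = 0) \<and>
     (\<forall>v\<in>{1..n}. \<forall>i\<in>{1..d}. f v i \<noteq> 0 \<longrightarrow> (\<exists>j\<in>{1..d}. f (f v i) j = v))"

definition adj :: "nat \<Rightarrow> inc_fun \<Rightarrow> nat \<Rightarrow> nat \<Rightarrow> bool" where
  "adj d f u w \<longleftrightarrow> w \<noteq> 0 \<and> (\<exists>i\<in>{1..d}. f u i = w)"

definition connected_graph :: "nat \<Rightarrow> nat \<Rightarrow> inc_fun \<Rightarrow> bool" where
  "connected_graph d n f \<longleftrightarrow> (\<forall>u\<in>{1..n}. \<forall>w\<in>{1..n}. (adj d f)\<^sup>*\<^sup>* u w)"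

definition in_P :: "nat \<Rightarrow> nat \<Rightarrow> inc_fun \<Rightarrow> bool" where
  "in_P d n f \<longleftrightarrow> valid_graph d n f \<and> connected_graph d n f"

definition dist_d :: "nat \<Rightarrow> nat \<Rightarrow> inc_fun \<Rightarrow> inc_fun \<Rightarrow> real" where
  "dist_d d n f g =
     real (card {(v, i). v \<in> {1..n} \<and> i \<in> {1..d} \<and> f v i \<noteq> g v i}) / real (d * n)"

definition far :: "nat \<Rightarrow> nat \<Rightarrow> real \<Rightarrow> inc_fun \<Rightarrow> bool" where
  "far d n \<gamma> f \<longleftrightarrow> (\<forall>g. in_P d n g \<longrightarrow> dist_d d n f g > \<gamma>)"

text \<open>Neighbouring graphs: obtained from one another by changing the neighbours of
exactly one vertex v: the graphs differ, adjacency among vertices other than v is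
unchanged, and incidence lists of vertices that are neither v nor a neighbour of v
(in either graph) are unchanged.\<close>
definition neighbouring :: "nat \<Rightarrow> nat \<Rightarrow> inc_fun \<Rightarrow> inc_fun \<Rightarrow> bool" where
  "neighbouring d n f g \<longleftrightarrow> f \<noteq> g \<and>
     (\<exists>v\<in>{1..n}.
        (\<forall>u w. u \<noteq> v \<and> w \<noteq> v \<longrightarrow> (adj d f u w \<longleftrightarrow> adj d g u w)) \<and>
        (\<forall>u. u \<noteq> v \<and> \<not> adj d f v u \<and> \<not> adj d g v u \<longrightarrow> (\<forall>i. f u i = g u i)))"

text \<open>A deterministic adaptive algorithm probing f: either halts with an output, or
probes (v,i) and continues depending on the answer. A randomised tester is a
probability distribution over such algorithms (its random coins).\<close>

datatype qtree = Leaf bool | Probe nat nat "nat \<Rightarrow> qtree"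

primrec run :: "qtree \<Rightarrow> inc_fun \<Rightarrow> (nat \<times> nat) list \<times> bool" where
  "run (Leaf b) f = ([], b)"
| "run (Probe v i k) f = (let r = run (k (f v i)) f in ((v, i) # fst r, snd r))"

definition access :: "qtree pmf \<Rightarrow> inc_fun \<Rightarrow> (nat \<times> nat) list pmf" where
  "access T f = map_pmf (\<lambda>t. fst (run t f)) T"

definition tester_output :: "qtree pmf \<Rightarrow> inc_fun \<Rightarrow> bool pmf" where
  "tester_output T f = map_pmf (\<lambda>t. snd (run t f)) T"

definition is_tester :: "nat \<Rightarrow> nat \<Rightarrow> real \<Rightarrow> real \<Rightarrow> qtree pmf \<Rightarrow> bool" where
  "is_tester d n \<beta> \<gamma> T \<longleftrightarrow>
     (\<forall>f. valid_graph d n f \<and> in_P d n f \<longrightarrow> measure_pmf.prob (tester_output T f) {True} \<ge> \<beta>) \<and>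
     (\<forall>f. valid_graph d n f \<and> far d n \<gamma> f \<longrightarrow> measure_pmf.prob (tester_output T f) {False} \<ge> \<beta>)"

definition diff_oblivious :: "nat \<Rightarrow> nat \<Rightarrow> real \<Rightarrow> real \<Rightarrow> qtree pmf \<Rightarrow> bool" where
  "diff_oblivious d n \<epsilon> \<delta> T \<longleftrightarrow>
     (\<forall>f g S. valid_graph d n f \<and> valid_graph d n g \<and> neighbouring d n f g \<longrightarrow>
        measure_pmf.prob (access T f) S \<le> exp \<epsilon> * measure_pmf.prob (access T g) S + \<delta>)"

text \<open>Running time (at least the number of probes) of coin outcome t on f.\<close>
definition num_probes :: "qtree \<Rightarrow> inc_fun \<Rightarrow> nat" where
  "num_probes t f = length (fst (run t f))"

end

theory Submission
  imports Defs "HOL-Combinatorics.Permutations"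
begin

text \<open>Every permutation of the vertices has a cycle graph of maximal degree 2.  Conjugating a
fixed product of disjoint triangles (plus isolated vertices), or a fixed Hamiltonian cycle, by a
uniformly random permutation s gives graphs that are 1/3-far from connected, respectively
connected, so the tester must tell the two apart with advantage 1/2.  Unless the run on the
triangle graph probes an isolated vertex, two vertices of one triangle, or vertices of two
neighbouring triangles, its view is reproduced exactly by the cycle graph of a permutation that
depends injectively on s.  Differential obliviousness bounds the first two events: a path of two
(resp. four) neighbouring graphs exchanges a triangle vertex with an isolated vertex (resp. with a
vertex of another triangle), at a cost e^(2 eps) (resp. e^(4 eps)), so these events are about as
likely as probing an average position (resp. pair of positions).  Symmetry alone bounds the third
event.  With L probes the advantage 1/2 is therefore at most
O(e^(2 eps) L / n + e^(4 eps) L^2 / n + n e^(4 eps) delta), which forces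
L = Omega(sqrt n / e^(2 eps)) as long as n e^(4 eps) delta is small.\<close>

section \<open>Cycle graphs of permutations\<close>

abbreviation tr :: "nat \<Rightarrow> nat \<Rightarrow> nat \<Rightarrow> nat" where
  "tr \<equiv> Transposition.transpose"

text \<open>A vertex v moved by r is joined to r v and to inv r v; on a 2-cycle these coincide and
are listed only once.\<close>
definition perm_graph :: "nat \<Rightarrow> (nat \<Rightarrow> nat) \<Rightarrow> inc_fun" where
  "perm_graph n r v i = (if v \<in> {1..n} \<and> r v \<noteq> v then
     (if i = 1 then (if r (r v) = v then r v else inv r v)
      else if i = 2 \<and> r (r v) \<noteq> v then r v else 0) else 0)"

lemma permutes_facts:
  assumes "r permutes {1..n}"
  shows "\<And>v. v \<in> {1..n} \<Longrightarrow> r v \<in> {1..n}"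
    and "\<And>v. v \<in> {1..n} \<Longrightarrow> inv r v \<in> {1..n}"
    and "\<And>v. r (inv r v) = v" and "\<And>v. inv r (r v) = v"
    and "\<And>x y. (inv r y = x) = (r x = y)"
    and "\<And>x y. (r x = r y) = (x = y)"
  using permutes_in_image[OF assms] permutes_in_image[OF permutes_inv[OF assms]]
    permutes_inverses[OF assms] permutes_inv_eq[OF assms] permutes_inj[OF assms]
  by (auto simp: inj_eq)

lemma perm_graph_back_edge:
  assumes r: "r permutes {1..n}" and v: "v \<in> {1..n}" and i: "i \<in> {1..(2::nat)}"
    and h: "perm_graph n r v i \<noteq> 0"
  shows "\<exists>j\<in>{1..2}. perm_graph n r (perm_graph n r v i) j = v"
proof -
  note pf = permutes_facts[OF r]
  have rv: "r v \<in> {1..n}" "inv r v \<in> {1..n}" using pf v by auto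
  have moved: "r v \<noteq> v" using h by (auto simp: perm_graph_def split: if_splits)
  show ?thesis
  proof (cases "r (r v) = v")
    case True
    then have "i = 1" "perm_graph n r v i = r v" using h by (auto simp: perm_graph_def split: if_splits)
    moreover have "perm_graph n r (r v) 1 = v" using True rv moved by (auto simp: perm_graph_def)
    ultimately show ?thesis by auto
  next
    case long: False
    show ?thesis
    proof (cases "i = 1")
      case True
      then have e: "perm_graph n r v i = inv r v" using long moved v by (auto simp: perm_graph_def)
      have "r (inv r v) = v" using pf by auto
      moreover have "inv r v \<noteq> v" "r (r (inv r v)) \<noteq> inv r v" using long moved pf by metis+
      ultimately have "perm_graph n r (inv r v) 2 = v" using rv by (auto simp: perm_graph_def)
      then show ?thesis using e by auto
    next
      case False
      then have "i = 2" using i by auto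
      then have e: "perm_graph n r v i = r v" using long moved v by (auto simp: perm_graph_def)
      have "r (r v) \<noteq> r v" "r (r (r v)) \<noteq> r v" using long moved pf by metis+
      then have "perm_graph n r (r v) 1 = v" using pf rv by (auto simp: perm_graph_def)
      then show ?thesis using e by auto
    qed
  qed
qed

lemma valid_perm_graph:
  assumes r: "r permutes {1..n}"
  shows "valid_graph 2 n (perm_graph n r)"
proof -
  note pf = permutes_facts[OF r]
  have outside: "\<forall>v i. (v \<notin> {1..n} \<or> i \<notin> {1..2}) \<longrightarrow> perm_graph n r v i = 0"
    by (auto simp: perm_graph_def)
  have range: "\<forall>v\<in>{1..n}. \<forall>i\<in>{1..2}. perm_graph n r v i \<le> n \<and> perm_graph n r v i \<noteq> v"
  proof (intro ballI)
    fix v i assume v: "v \<in> {1..n}" and i: "i \<in> {1..(2::nat)}"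
    have "r v \<in> {1..n}" "inv r v \<in> {1..n}" using pf v by auto
    moreover have "r v \<noteq> v \<Longrightarrow> inv r v \<noteq> v" using pf by metis
    ultimately show "perm_graph n r v i \<le> n \<and> perm_graph n r v i \<noteq> v"
      using v by (auto simp: perm_graph_def)
  qed
  have distinct: "\<forall>v\<in>{1..n}. \<forall>i\<in>{1..2}. \<forall>j\<in>{1..2}. i \<noteq> j \<and> perm_graph n r v i \<noteq> 0
      \<longrightarrow> perm_graph n r v i \<noteq> perm_graph n r v j"
  proof (intro ballI impI)
    fix v i j assume v: "v \<in> {1..n}" and i: "i \<in> {1..(2::nat)}" and j: "j \<in> {1..(2::nat)}"
      and h: "i \<noteq> j \<and> perm_graph n r v i \<noteq> 0"
    have "r (r v) \<noteq> v \<Longrightarrow> inv r v \<noteq> r v" using pf by metis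
    then show "perm_graph n r v i \<noteq> perm_graph n r v j" using h i j v
      by (auto simp: perm_graph_def split: if_splits)
  qed
  have packed: "\<forall>v\<in>{1..n}. \<forall>i\<in>{1..2}. \<forall>j\<in>{1..2}. i \<le> j \<and> perm_graph n r v i = 0
      \<longrightarrow> perm_graph n r v j = 0"
  proof (intro ballI impI)
    fix v i j assume v: "v \<in> {1..n}" and i: "i \<in> {1..(2::nat)}" and j: "j \<in> {1..(2::nat)}"
      and h: "i \<le> j \<and> perm_graph n r v i = 0"
    have "r v \<in> {1..n}" "inv r v \<in> {1..n}" using pf v by auto
    then show "perm_graph n r v j = 0" using h i j v
      by (auto simp: perm_graph_def split: if_splits)
  qed
  have symmetric: "\<forall>v\<in>{1..n}. \<forall>i\<in>{1..2}. perm_graph n r v i \<noteq> 0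
      \<longrightarrow> (\<exists>j\<in>{1..2}. perm_graph n r (perm_graph n r v i) j = v)"
    using perm_graph_back_edge[OF r] by blast
  show ?thesis unfolding valid_graph_def using outside range distinct packed symmetric by blast
qed

lemma adj_perm_graph:
  assumes r: "r permutes {1..n}"
  shows "adj 2 (perm_graph n r) u w \<longleftrightarrow> u \<in> {1..n} \<and> w \<noteq> u \<and> (w = r u \<or> r w = u)"
proof
  note pf = permutes_facts[OF r]
  assume "adj 2 (perm_graph n r) u w"
  then obtain i where i: "i \<in> {1..2}" "perm_graph n r u i = w" "w \<noteq> 0" by (auto simp: adj_def)
  then have u: "u \<in> {1..n}" "r u \<noteq> u" by (auto simp: perm_graph_def split: if_splits)
  have "inv r u \<noteq> u" using u pf by metis
  then show "u \<in> {1..n} \<and> w \<noteq> u \<and> (w = r u \<or> r w = u)" using i u pf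
    by (auto simp: perm_graph_def split: if_splits)
next
  note pf = permutes_facts[OF r]
  assume h: "u \<in> {1..n} \<and> w \<noteq> u \<and> (w = r u \<or> r w = u)"
  then have ru: "r u \<noteq> u" using pf by metis
  have "w \<in> {1..n}" using h pf by (metis permutes_in_image permutes_inv_eq r)
  then have w0: "w \<noteq> 0" by auto
  show "adj 2 (perm_graph n r) u w"
  proof (cases "w = r u")
    case True
    then have "perm_graph n r u 1 = w \<or> perm_graph n r u 2 = w" using h ru by (auto simp: perm_graph_def)
    then show ?thesis using w0 by (auto simp: adj_def)
  next
    case False
    then have "r w = u" "inv r u = w" using h pf by auto
    then have "perm_graph n r u 1 = w" using False h ru pf by (auto simp: perm_graph_def)
    then show ?thesis using w0 by (auto simp: adj_def)
  qed
qed

lemma perm_graph_cong: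
  assumes r1: "r1 permutes {1..n}" and r2: "r2 permutes {1..n}"
    and "r1 u = r2 u" and "inv r1 u = inv r2 u"
  shows "perm_graph n r1 u i = perm_graph n r2 u i"
proof -
  have "r1 (r1 u) = u \<longleftrightarrow> inv r1 u = r1 u" using permutes_facts(5)[OF r1] by metis
  moreover have "r2 (r2 u) = u \<longleftrightarrow> inv r2 u = r2 u" using permutes_facts(5)[OF r2] by metis
  ultimately show ?thesis using assms by (auto simp: perm_graph_def)
qed


lemma neighbouring_sym: "neighbouring d n f g \<Longrightarrow> neighbouring d n g f"
  unfolding neighbouring_def by metis

text \<open>Composing with tr x w turns the triangle x \<rightarrow> y \<rightarrow> w of r into the edge y w and the
isolated vertex x; only the incidence list of x and of its former neighbours change.\<close>
lemma neighbouring_detach: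
  assumes r: "r permutes {1..n}" and V: "x \<in> {1..n}" "y \<in> {1..n}" "w \<in> {1..n}"
    and D: "x \<noteq> y" "y \<noteq> w" "x \<noteq> w" and E: "r x = y" "r y = w" "r w = x"
  shows "neighbouring 2 n (perm_graph n r) (perm_graph n (r \<circ> tr x w))"
proof -
  define r' where "r' = r \<circ> tr x w"
  have r': "r' permutes {1..n}" unfolding r'_def
    by (rule permutes_compose[OF permutes_swap_id[OF V(1) V(3)] r])
  have r'_vals: "r' x = x" "r' w = y" "\<And>u. u \<noteq> x \<Longrightarrow> u \<noteq> w \<Longrightarrow> r' u = r u"
    using E by (auto simp: r'_def)
  note pf = permutes_facts[OF r] and pf' = permutes_facts[OF r']
  have differ: "perm_graph n r \<noteq> perm_graph n r'"
  proof
    assume h: "perm_graph n r = perm_graph n r'"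
    have "r (r x) \<noteq> x" using E D by auto
    then have "perm_graph n r x 2 = y" using E D V by (auto simp: perm_graph_def)
    moreover have "perm_graph n r' x 2 = 0" using r'_vals by (auto simp: perm_graph_def)
    ultimately show False using h V by auto
  qed
  have same_adj: "\<forall>u u'. u \<noteq> x \<and> u' \<noteq> x \<longrightarrow>
      (adj 2 (perm_graph n r) u u' \<longleftrightarrow> adj 2 (perm_graph n r') u u')"
  proof (intro allI impI)
    fix u u' assume h: "u \<noteq> x \<and> u' \<noteq> x"
    have "r u' = w \<longleftrightarrow> u' = y" "u' \<noteq> w \<Longrightarrow> r' u' = w \<longleftrightarrow> u' = y"
      using pf(6)[of u' y] E r'_vals h by auto
    then have "(u' = r u \<or> r u' = u) \<longleftrightarrow> (u' = r' u \<or> r' u' = u)"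
      using E r'_vals h D by (cases "u = w"; cases "u' = w") auto
    then show "adj 2 (perm_graph n r) u u' \<longleftrightarrow> adj 2 (perm_graph n r') u u'"
      using adj_perm_graph[OF r] adj_perm_graph[OF r'] by auto
  qed
  have same_lists: "\<forall>u. u \<noteq> x \<and> \<not> adj 2 (perm_graph n r) x u \<and> \<not> adj 2 (perm_graph n r') x u
      \<longrightarrow> (\<forall>i. perm_graph n r u i = perm_graph n r' u i)"
  proof (intro allI impI)
    fix u i assume h: "u \<noteq> x \<and> \<not> adj 2 (perm_graph n r) x u \<and> \<not> adj 2 (perm_graph n r') x u"
    have "u \<noteq> y" "u \<noteq> w" using h E D V adj_perm_graph[OF r] by auto
    then have ru: "r' u = r u" using r'_vals h by auto
    obtain t where t: "r t = u" using pf(3) by metis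
    have "t \<noteq> x" "t \<noteq> w" using t E h \<open>u \<noteq> y\<close> by auto
    then have "r' t = u" using r'_vals t by auto
    then have "inv r' u = inv r u" using t pf(5) pf'(5) by metis
    then show "perm_graph n r u i = perm_graph n r' u i" using perm_graph_cong[OF r r'] ru by metis
  qed
  show ?thesis
    unfolding neighbouring_def r'_def[symmetric] using differ V(1) same_adj same_lists by blast
qed

lemma neighbouring_attach:
  assumes r: "r permutes {1..n}" and V: "z \<in> {1..n}" "y \<in> {1..n}" "w \<in> {1..n}"
    and D: "z \<noteq> y" "y \<noteq> w" "z \<noteq> w" and E: "r z = z" "r y = w" "r w = y"
  shows "neighbouring 2 n (perm_graph n r) (perm_graph n (r \<circ> tr z w))"
proof -
  let ?r = "r \<circ> tr z w"
  have r': "?r permutes {1..n}" by (rule permutes_compose[OF permutes_swap_id[OF V(1) V(3)] r])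
  have "neighbouring 2 n (perm_graph n ?r) (perm_graph n (?r \<circ> tr z w))"
    by (rule neighbouring_detach[OF r' V D]) (use E D in auto)
  then show ?thesis by (simp add: comp_assoc neighbouring_sym)
qed


section \<open>Probes and differential obliviousness\<close>

definition probed :: "qtree \<Rightarrow> inc_fun \<Rightarrow> nat set" where
  "probed t f = {v. \<exists>i. (v, i) \<in> set (fst (run t f))}"

lemma probed_eq_image: "probed t f = fst ` set (fst (run t f))"
  unfolding probed_def by force

lemma finite_probed: "finite (probed t f)"
  unfolding probed_eq_image by simp

lemma card_probed_le: "card (probed t f) \<le> num_probes t f"
  unfolding probed_eq_image num_probes_def by (meson card_image_le card_length finite_set le_trans)

lemma run_cong:
  "(\<And>v i. v \<in> probed t f \<Longrightarrow> f v i = g v i) \<Longrightarrow> run t g = run t f"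
proof (induction t)
  case (Leaf b) then show ?case by simp
next
  case (Probe v i k)
  have "f v i = g v i" using Probe.prems by (auto simp: probed_def Let_def)
  moreover have "run (k (f v i)) g = run (k (f v i)) f"
    using Probe.prems by (intro Probe.IH) (auto simp: probed_def Let_def)
  ultimately show ?case by (simp add: Let_def)
qed

lemma integrable_of_bool_pmf: "integrable (measure_pmf T) (\<lambda>t. of_bool (P t) :: real)"
  by (rule measure_pmf.integrable_const_bound[where B=1]) auto

lemma prob_access: "measure_pmf.prob (access T f) S
    = measure_pmf.expectation T (\<lambda>t. of_bool (fst (run t f) \<in> S))"
proof -
  have "measure_pmf.prob (access T f) S
      = measure_pmf.expectation T (indicator ((\<lambda>t. fst (run t f)) -` S))"
    unfolding access_def measure_map_pmf by simp
  also have "\<dots> = measure_pmf.expectation T (\<lambda>t. of_bool (fst (run t f) \<in> S))"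
    by (rule Bochner_Integration.integral_cong) (auto simp: indicator_def)
  finally show ?thesis .
qed

lemma prob_tester_output: "measure_pmf.prob (tester_output T f) {b}
    = measure_pmf.expectation T (\<lambda>t. of_bool (snd (run t f) = b))"
proof -
  have "measure_pmf.prob (tester_output T f) {b}
      = measure_pmf.expectation T (indicator ((\<lambda>t. snd (run t f)) -` {b}))"
    unfolding tester_output_def measure_map_pmf by simp
  also have "\<dots> = measure_pmf.expectation T (\<lambda>t. of_bool (snd (run t f) = b))"
    by (rule Bochner_Integration.integral_cong) (auto simp: indicator_def)
  finally show ?thesis .
qed

lemma iterated_step_bound:
  fixes p :: "nat \<Rightarrow> real"
  assumes "0 \<le> \<epsilon>" "0 \<le> \<delta>" "\<And>i. i < k \<Longrightarrow> p i \<le> exp \<epsilon> * p (Suc i) + \<delta>"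
  shows "p 0 \<le> exp (k * \<epsilon>) * p k + k * exp (k * \<epsilon>) * \<delta>"
  using assms(3)
proof (induction k arbitrary: p)
  case 0 then show ?case by simp
next
  case (Suc k)
  have IH: "p 1 \<le> exp (k * \<epsilon>) * p (Suc k) + k * exp (k * \<epsilon>) * \<delta>"
    using Suc.IH[of "\<lambda>i. p (Suc i)"] Suc.prems by simp
  have exp_Suc: "exp (Suc k * \<epsilon>) = exp \<epsilon> * exp (k * \<epsilon>)"
    by (simp add: distrib_right mult_exp_exp[symmetric])
  have "\<delta> \<le> exp (Suc k * \<epsilon>) * \<delta>" using assms(1,2) by (simp add: mult_le_cancel_right1)
  moreover have "p 0 \<le> exp \<epsilon> * p 1 + \<delta>" using Suc.prems by simp
  moreover have "exp \<epsilon> * p 1 \<le> exp \<epsilon> * (exp (k * \<epsilon>) * p (Suc k) + k * exp (k * \<epsilon>) * \<delta>)"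
    using IH by simp
  ultimately show ?case unfolding exp_Suc by (simp add: algebra_simps)
qed

lemma diff_oblivious_path:
  fixes \<epsilon> \<delta> :: real
  assumes DO: "diff_oblivious d n \<epsilon> \<delta> T" and "0 \<le> \<epsilon>" "0 \<le> \<delta>" and "gs \<noteq> []"
    and valid: "\<forall>g\<in>set gs. valid_graph d n g" and path: "successively (neighbouring d n) gs"
  shows "measure_pmf.prob (access T (hd gs)) S \<le> exp ((length gs - 1) * \<epsilon>) * measure_pmf.prob (access T (last gs)) S
      + (length gs - 1) * exp ((length gs - 1) * \<epsilon>) * \<delta>"
proof -
  let ?p = "\<lambda>i. measure_pmf.prob (access T (gs ! i)) S" and ?k = "length gs - 1"
  have "?p i \<le> exp \<epsilon> * ?p (Suc i) + \<delta>" if "i < ?k" for i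
    using DO valid successively_nth[OF path] that unfolding diff_oblivious_def by simp
  then have "?p 0 \<le> exp (?k * \<epsilon>) * ?p ?k + ?k * exp (?k * \<epsilon>) * \<delta>"
    by (rule iterated_step_bound[OF assms(2,3)])
  then show ?thesis using \<open>gs \<noteq> []\<close> by (simp add: hd_conv_nth last_conv_nth)
qed


section \<open>Triangles versus a Hamiltonian cycle\<close>

text \<open>Positions 1 .. 3 m, where m = num_triangles n, form m consecutive triangles; the
remaining positions, at least one, are fixed by tri_perm.\<close>
definition num_triangles :: "nat \<Rightarrow> nat" where "num_triangles n = (n - 1) div 3"

definition tri_perm :: "nat \<Rightarrow> nat \<Rightarrow> nat" where
  "tri_perm n k = (if 1 \<le> k \<and> k \<le> 3 * num_triangles n then (if k mod 3 = 0 then k - 2 else k + 1) else k)"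

definition tri_perm_inv :: "nat \<Rightarrow> nat \<Rightarrow> nat" where
  "tri_perm_inv n k = (if 1 \<le> k \<and> k \<le> 3 * num_triangles n then (if k mod 3 = 1 then k + 2 else k - 1) else k)"

definition ham_perm :: "nat \<Rightarrow> nat \<Rightarrow> nat" where
  "ham_perm n k = (if 1 \<le> k \<and> k < n then k + 1 else if k = n then 1 else k)"

definition ham_perm_inv :: "nat \<Rightarrow> nat \<Rightarrow> nat" where
  "ham_perm_inv n k = (if 1 < k \<and> k \<le> n then k - 1 else if k = 1 then n else k)"

definition triangle_of :: "nat \<Rightarrow> nat" where "triangle_of k = (k - 1) div 3"

definition corner :: "nat \<Rightarrow> nat" where "corner k = (k - 1) mod 3"

lemma three_num_triangles_less: "1 \<le> n \<Longrightarrow> 3 * num_triangles n < n"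
  unfolding num_triangles_def by linarith

lemma triangle_corner_decomp:
  "k \<in> {1..3 * num_triangles n} \<Longrightarrow>
    k = 3 * triangle_of k + corner k + 1 \<and> triangle_of k < num_triangles n \<and> corner k < 3"
  unfolding triangle_of_def corner_def by auto

lemma triangle_of_corner:
  "j < 3 \<Longrightarrow> triangle_of (3 * c + j + 1) = c" "j < 3 \<Longrightarrow> corner (3 * c + j + 1) = j"
  unfolding triangle_of_def corner_def by simp_all

lemma tri_perm_triangle:
  assumes "q < num_triangles n"
  shows "tri_perm n (3*q+1) = 3*q+2" "tri_perm n (3*q+2) = 3*q+3" "tri_perm n (3*q+3) = 3*q+1"
    "tri_perm_inv n (3*q+1) = 3*q+3" "tri_perm_inv n (3*q+2) = 3*q+1" "tri_perm_inv n (3*q+3) = 3*q+2"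
  using assms unfolding tri_perm_def tri_perm_inv_def by (simp_all add: mod_Suc)

lemma tri_perm_outside:
  "k = 0 \<or> 3 * num_triangles n < k \<Longrightarrow> tri_perm n k = k \<and> tri_perm_inv n k = k"
  unfolding tri_perm_def tri_perm_inv_def by auto

lemma position_cases:
  obtains (outside) "k = 0 \<or> 3 * num_triangles n < k"
    | (first) q where "q < num_triangles n" "k = 3*q+1"
    | (second) q where "q < num_triangles n" "k = 3*q+2"
    | (third) q where "q < num_triangles n" "k = 3*q+3"
proof (cases "k = 0 \<or> 3 * num_triangles n < k")
  case False
  then have k: "k \<in> {1..3 * num_triangles n}" by auto
  note decomp = triangle_corner_decomp[OF k]
  consider "corner k = 0" | "corner k = 1" | "corner k = 2" using decomp by linarith
  then show ?thesis
  proof cases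
    case 1 then show ?thesis using first[of "triangle_of k"] decomp by simp
  next
    case 2 then show ?thesis using second[of "triangle_of k"] decomp by simp
  next
    case 3 then show ?thesis using third[of "triangle_of k"] decomp by simp
  qed
qed (rule outside)

lemma triangle_corner_of_triangle:
  "triangle_of (3*q+1) = q" "triangle_of (3*q+2) = q" "triangle_of (3*q+3) = q"
  "corner (3*q+1) = 0" "corner (3*q+2) = 1" "corner (3*q+3) = 2"
  unfolding triangle_of_def corner_def by (simp_all add: mod_Suc)

lemma tri_perm_props:
  assumes "1 \<le> n"
  shows "tri_perm_inv n (tri_perm n k) = k \<and> tri_perm n (tri_perm_inv n k) = k \<and>
    (k \<in> {1..n} \<longrightarrow> tri_perm n k \<in> {1..n} \<and> tri_perm_inv n k \<in> {1..n})"
proof (cases rule: position_cases[of k n])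
  case outside then show ?thesis using tri_perm_outside[of k n] by auto
next
  case (first q)
  then show ?thesis using tri_perm_triangle[OF first(1)] three_num_triangles_less[OF assms] by auto
next
  case (second q)
  then show ?thesis using tri_perm_triangle[OF second(1)] three_num_triangles_less[OF assms] by auto
next
  case (third q)
  then show ?thesis using tri_perm_triangle[OF third(1)] three_num_triangles_less[OF assms] by auto
qed

lemma tri_perm_permutes:
  assumes "1 \<le> n" shows "tri_perm n permutes {1..n}"
proof (rule bij_imp_permutes)
  show "bij_betw (tri_perm n) {1..n} {1..n}"
    by (rule bij_betw_byWitness[where f'="tri_perm_inv n"]) (use tri_perm_props[OF assms] in auto)
  show "\<And>x. x \<notin> {1..n} \<Longrightarrow> tri_perm n x = x"
    using three_num_triangles_less[OF assms] unfolding tri_perm_def by auto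
qed

lemma inv_tri_perm:
  assumes "1 \<le> n" shows "inv (tri_perm n) k = tri_perm_inv n k"
  using permutes_inv_eq[OF tri_perm_permutes[OF assms]] tri_perm_props[OF assms] by metis

lemma tri_perm_in_triangle:
  assumes "1 \<le> p" "p \<le> 3 * num_triangles n"
  shows "1 \<le> tri_perm n p \<and> tri_perm n p \<le> 3 * num_triangles n" "tri_perm n p \<noteq> p"
    "tri_perm n (tri_perm n p) \<noteq> p" "tri_perm n (tri_perm n (tri_perm n p)) = p"
    "triangle_of (tri_perm n p) = triangle_of p" "triangle_of (tri_perm n (tri_perm n p)) = triangle_of p"
proof -
  have "(1 \<le> tri_perm n p \<and> tri_perm n p \<le> 3 * num_triangles n) \<and> tri_perm n p \<noteq> p \<and>
    tri_perm n (tri_perm n p) \<noteq> p \<and> tri_perm n (tri_perm n (tri_perm n p)) = p \<and>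
    triangle_of (tri_perm n p) = triangle_of p \<and> triangle_of (tri_perm n (tri_perm n p)) = triangle_of p"
    using assms
  proof (cases rule: position_cases[of p n])
    case (first q)
    then show ?thesis using tri_perm_triangle[OF first(1)] triangle_corner_of_triangle[of q] by simp
  next
    case (second q)
    then show ?thesis using tri_perm_triangle[OF second(1)] triangle_corner_of_triangle[of q] by simp
  next
    case (third q)
    then show ?thesis using tri_perm_triangle[OF third(1)] triangle_corner_of_triangle[of q] by simp
  qed auto
  then show "1 \<le> tri_perm n p \<and> tri_perm n p \<le> 3 * num_triangles n" "tri_perm n p \<noteq> p"
    "tri_perm n (tri_perm n p) \<noteq> p" "tri_perm n (tri_perm n (tri_perm n p)) = p"
    "triangle_of (tri_perm n p) = triangle_of p"
    "triangle_of (tri_perm n (tri_perm n p)) = triangle_of p" by auto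
qed

lemma ham_perm_props:
  assumes "1 \<le> n"
  shows "ham_perm_inv n (ham_perm n k) = k" "ham_perm n (ham_perm_inv n k) = k"
    "k \<in> {1..n} \<Longrightarrow> ham_perm n k \<in> {1..n}" "k \<in> {1..n} \<Longrightarrow> ham_perm_inv n k \<in> {1..n}"
  using assms unfolding ham_perm_def ham_perm_inv_def by auto

lemma ham_perm_permutes:
  assumes "1 \<le> n" shows "ham_perm n permutes {1..n}"
proof (rule bij_imp_permutes)
  show "bij_betw (ham_perm n) {1..n} {1..n}"
    by (rule bij_betw_byWitness[where f'="ham_perm_inv n"]) (use ham_perm_props[OF assms] in auto)
  show "\<And>x. x \<notin> {1..n} \<Longrightarrow> ham_perm n x = x" using assms unfolding ham_perm_def by auto
qed

lemma inv_ham_perm: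
  assumes "1 \<le> n" shows "inv (ham_perm n) k = ham_perm_inv n k"
  using permutes_inv_eq[OF ham_perm_permutes[OF assms]] ham_perm_props[OF assms] by metis

definition conj_perm :: "(nat \<Rightarrow> nat) \<Rightarrow> (nat \<Rightarrow> nat) \<Rightarrow> nat \<Rightarrow> nat" where
  "conj_perm s p = s \<circ> p \<circ> inv s"

lemma conj_perm_permutes: "s permutes S \<Longrightarrow> p permutes S \<Longrightarrow> conj_perm s p permutes S"
  unfolding conj_perm_def by (intro permutes_compose permutes_inv) auto

lemma conj_perm_apply: "s permutes S \<Longrightarrow> conj_perm s p (s k) = s (p k)"
  unfolding conj_perm_def using permutes_inverses(2) by fastforce

lemma inv_conj_perm_apply:
  assumes "s permutes S" "p permutes S"
  shows "inv (conj_perm s p) (s k) = s (inv p k)"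
proof -
  have "conj_perm s p (s (inv p k)) = s k"
    using conj_perm_apply[OF assms(1)] permutes_inverses(1)[OF assms(2)] by simp
  then show ?thesis using permutes_inv_eq[OF conj_perm_permutes[OF assms]] by metis
qed

lemma conj_perm_comp_transpose:
  assumes "bij s"
  shows "conj_perm (s \<circ> tr a b) p = tr (s a) (s b) \<circ> conj_perm s p \<circ> tr (s a) (s b)"
proof -
  have swap: "s \<circ> tr a b = tr (s a) (s b) \<circ> s"
    using transpose_comp_eq[OF assms, of "s a" "s b"] assms by (simp add: bij_is_inj)
  have "inv (tr (s a) (s b) \<circ> s) = inv s \<circ> tr (s a) (s b)"
    using assms by (simp add: o_inv_distrib)
  then show ?thesis unfolding conj_perm_def swap by (simp add: comp_assoc)
qed


definition tri_graph :: "nat \<Rightarrow> (nat \<Rightarrow> nat) \<Rightarrow> inc_fun" where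
  "tri_graph n s = perm_graph n (conj_perm s (tri_perm n))"

definition ham_graph :: "nat \<Rightarrow> (nat \<Rightarrow> nat) \<Rightarrow> inc_fun" where
  "ham_graph n s = perm_graph n (conj_perm s (ham_perm n))"

lemma valid_tri_graph: "1 \<le> n \<Longrightarrow> s permutes {1..n} \<Longrightarrow> valid_graph 2 n (tri_graph n s)"
  unfolding tri_graph_def by (rule valid_perm_graph[OF conj_perm_permutes[OF _ tri_perm_permutes]])

lemma tri_graph_triangle:
  assumes n: "1 \<le> n" and s: "s permutes {1..n}" and k: "1 \<le> k" "k \<le> 3 * num_triangles n"
  shows "tri_graph n s (s k) 1 = s (tri_perm_inv n k)" "tri_graph n s (s k) 2 = s (tri_perm n k)"
proof -
  let ?r = "conj_perm s (tri_perm n)"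
  have "s k \<in> {1..n}" using k three_num_triangles_less[OF n] permutes_in_image[OF s] by auto
  moreover have "?r (s k) = s (tri_perm n k)" "?r (?r (s k)) = s (tri_perm n (tri_perm n k))"
    using conj_perm_apply[OF s] by simp_all
  moreover have "inv ?r (s k) = s (tri_perm_inv n k)"
    using inv_conj_perm_apply[OF s tri_perm_permutes[OF n]] inv_tri_perm[OF n] by simp
  moreover have "tri_perm n k \<noteq> k" "tri_perm n (tri_perm n k) \<noteq> k"
    using tri_perm_in_triangle[OF k] by blast+
  ultimately show "tri_graph n s (s k) 1 = s (tri_perm_inv n k)" "tri_graph n s (s k) 2 = s (tri_perm n k)"
    unfolding tri_graph_def perm_graph_def using permutes_facts(6)[OF s] by auto
qed

lemma tri_graph_isolated:
  assumes s: "s permutes {1..n}" and k: "3 * num_triangles n < k"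
  shows "tri_graph n s (s k) i = 0"
proof -
  have "tri_perm n k = k" using k unfolding tri_perm_def by auto
  then show ?thesis
    unfolding tri_graph_def perm_graph_def using conj_perm_apply[OF s, of "tri_perm n" k] by auto
qed

definition mismatches :: "inc_fun \<Rightarrow> inc_fun \<Rightarrow> nat \<Rightarrow> nat" where
  "mismatches f g v = (if f v 1 \<noteq> g v 1 then 1 else 0) + (if f v 2 \<noteq> g v 2 then 1 else 0)"

lemma card_mismatches:
  assumes s: "s permutes {1..n}"
  shows "card {(v, i). v \<in> {1..n} \<and> i \<in> {1..2} \<and> f v i \<noteq> g v i} = (\<Sum>k\<in>{1..n}. mismatches f g (s k))"
proof -
  have "{(v, i). v \<in> {1..n} \<and> i \<in> {1..2} \<and> f v i \<noteq> g v i}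
      = Sigma {1..n} (\<lambda>v. {i \<in> {1..2}. f v i \<noteq> g v i})" by auto
  moreover have "card {i \<in> {1..(2::nat)}. f v i \<noteq> g v i} = mismatches f g v" for v
  proof -
    have "{i \<in> {1..(2::nat)}. f v i \<noteq> g v i}
        = (if f v 1 \<noteq> g v 1 then {1} else {}) \<union> (if f v 2 \<noteq> g v 2 then {2} else {})"
      by (auto simp: le_Suc_eq numeral_2_eq_2)
    then show ?thesis unfolding mismatches_def by simp
  qed
  ultimately have "card {(v, i). v \<in> {1..n} \<and> i \<in> {1..2} \<and> f v i \<noteq> g v i}
      = (\<Sum>v\<in>{1..n}. mismatches f g v)" by (simp add: card_SigmaI)
  also have "\<dots> = (\<Sum>k\<in>{1..n}. mismatches f g (s k))"
    by (subst sum.permute[OF s]) (simp add: comp_def)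
  finally show ?thesis .
qed

lemma valid_graph_back_edge:
  assumes g: "valid_graph 2 n g" and u: "u \<in> {1..n}" and i: "i \<in> {1..2}"
    and e: "g u i = v" and v0: "v \<noteq> 0"
  shows "g v 1 = u \<or> g v 2 = u"
proof -
  have "\<exists>j\<in>{1..2}. g (g u i) j = u" using g u i e v0 unfolding valid_graph_def by blast
  then obtain j where "j \<in> {1..(2::nat)}" "g v j = u" using e by blast
  moreover have "j = 1 \<or> j = 2" using calculation(1) by auto
  ultimately show ?thesis by auto
qed

text \<open>A connected graph on at least 4 vertices has no triangle component.\<close>
lemma triangle_mismatches:
  assumes g: "valid_graph 2 n g" and cg: "connected_graph 2 n g"
    and V: "a \<in> {1..n}" "b \<in> {1..n}" "c \<in> {1..n}" and D: "a \<noteq> b" "b \<noteq> c" "a \<noteq> c" and n4: "4 \<le> n"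
    and f: "f a 1 = c" "f a 2 = b" "f b 1 = a" "f b 2 = c" "f c 1 = b" "f c 2 = a"
  shows "2 \<le> mismatches f g a + mismatches f g b + mismatches f g c"
proof (rule ccontr)
  assume h: "\<not> 2 \<le> mismatches f g a + mismatches f g b + mismatches f g c"
  have one: "1 \<in> {1..(2::nat)}" and two: "2 \<in> {1..(2::nat)}" by auto
  note back_edge = valid_graph_back_edge[OF g]
  have "g c 2 = a \<Longrightarrow> g a 1 = c \<or> g a 2 = c" "g b 1 = a \<Longrightarrow> g a 1 = b \<or> g a 2 = b"
    "g a 2 = b \<Longrightarrow> g b 1 = a \<or> g b 2 = a" "g c 1 = b \<Longrightarrow> g b 1 = c \<or> g b 2 = c"
    "g b 2 = c \<Longrightarrow> g c 1 = b \<or> g c 2 = b" "g a 1 = c \<Longrightarrow> g c 1 = a \<or> g c 2 = a"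
    using back_edge[OF V(3) two] back_edge[OF V(2) one] back_edge[OF V(1) two]
      back_edge[OF V(3) one] back_edge[OF V(2) two] back_edge[OF V(1) one] V by auto
  then have all: "g a 1 = c \<and> g a 2 = b \<and> g b 1 = a \<and> g b 2 = c \<and> g c 1 = b \<and> g c 2 = a"
    using h f D unfolding mismatches_def by (auto split: if_splits)
  have closed: "w \<in> {a,b,c}" if u: "u \<in> {a,b,c}" and uw: "adj 2 g u w" for u w
  proof -
    obtain i where i: "i \<in> {1..(2::nat)}" "g u i = w" using uw unfolding adj_def by blast
    then have "i = 1 \<or> i = 2" by auto
    then show "w \<in> {a,b,c}" using u i(2) all by auto
  qed
  have reach: "w \<in> {a,b,c}" if "(adj 2 g)\<^sup>*\<^sup>* a w" for w
    using that by (induction rule: rtranclp_induct) (use closed in auto)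
  have "\<not> {1..n} \<subseteq> {a,b,c}"
  proof
    assume "{1..n} \<subseteq> {a,b,c}"
    then have "card {1..n} \<le> card {a,b,c}" by (intro card_mono) auto
    then show False using n4 D by simp
  qed
  then obtain w where "w \<in> {1..n}" "w \<notin> {a,b,c}" by blast
  then show False using cg V reach unfolding connected_graph_def by blast
qed

lemma connected_first_neighbour:
  assumes g: "valid_graph 2 n g" and cg: "connected_graph 2 n g" and n: "2 \<le> n" and z: "z \<in> {1..n}"
  shows "g z 1 \<noteq> 0"
proof
  assume g0: "g z 1 = 0"
  define w where "w = (if z = 1 then 2 else (1::nat))"
  have w: "w \<in> {1..n}" "w \<noteq> z" using n z unfolding w_def by auto
  have "(adj 2 g)\<^sup>*\<^sup>* z w" using cg z w unfolding connected_graph_def by blast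
  then obtain w' where "adj 2 g z w'" using w(2) by (metis converse_rtranclpE)
  then obtain i where i: "i \<in> {1..(2::nat)}" "g z i = w'" "w' \<noteq> 0" unfolding adj_def by blast
  have "\<forall>v\<in>{1..n}. \<forall>i\<in>{1..2}. \<forall>j\<in>{1..2}. i \<le> j \<and> g v i = 0 \<longrightarrow> g v j = 0"
    using g unfolding valid_graph_def by blast
  then have "g z i = 0" using z i(1) g0 by force
  then show False using i by simp
qed

lemma sum_triples:
  fixes h :: "nat \<Rightarrow> 'a::comm_monoid_add"
  shows "(\<Sum>k\<in>{1..3*m}. h k) = (\<Sum>q<m. h (3*q+1) + h (3*q+2) + h (3*q+3))"
proof (induction m)
  case (Suc m)
  have "{1..3 * Suc m} = {1..3*m} \<union> {3*m+1, 3*m+2, 3*m+3}" by auto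
  then have "(\<Sum>k\<in>{1..3 * Suc m}. h k) = (\<Sum>k\<in>{1..3*m}. h k) + (h (3*m+1) + h (3*m+2) + h (3*m+3))"
    by (simp add: sum.union_disjoint ac_simps)
  then show ?case using Suc by simp
qed simp

lemma triangles_mismatches:
  assumes n: "4 \<le> n" and s: "s permutes {1..n}" and g: "valid_graph 2 n g" and cg: "connected_graph 2 n g"
  shows "2 * num_triangles n \<le> (\<Sum>k\<in>{1..3 * num_triangles n}. mismatches (tri_graph n s) g (s k))"
proof -
  let ?f = "tri_graph n s" and ?m = "num_triangles n"
  have n1: "1 \<le> n" using n by simp
  have m3: "3 * ?m < n" using three_num_triangles_less[OF n1] .
  have inj: "\<And>a b. s a = s b \<longleftrightarrow> a = b" and inV: "\<And>k. k \<in> {1..n} \<Longrightarrow> s k \<in> {1..n}"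
    using permutes_facts[OF s] by blast+
  have "2 \<le> mismatches ?f g (s (3*q+1)) + mismatches ?f g (s (3*q+2)) + mismatches ?f g (s (3*q+3))"
    if q: "q < ?m" for q
  proof (rule triangle_mismatches[OF g cg _ _ _ _ _ _ n])
    have k: "3*q+1 \<le> 3*?m" "3*q+2 \<le> 3*?m" "3*q+3 \<le> 3*?m" using q by auto
    then show "s (3*q+1) \<in> {1..n}" "s (3*q+2) \<in> {1..n}" "s (3*q+3) \<in> {1..n}" using m3 inV by auto
    show "s (3*q+1) \<noteq> s (3*q+2)" "s (3*q+2) \<noteq> s (3*q+3)" "s (3*q+1) \<noteq> s (3*q+3)" using inj by auto
    note vals = tri_perm_triangle[OF q]
    show "?f (s (3*q+1)) 1 = s (3*q+3)" "?f (s (3*q+1)) 2 = s (3*q+2)"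
      using tri_graph_triangle[OF n1 s, of "3*q+1"] k vals by auto
    show "?f (s (3*q+2)) 1 = s (3*q+1)" "?f (s (3*q+2)) 2 = s (3*q+3)"
      using tri_graph_triangle[OF n1 s, of "3*q+2"] k vals by auto
    show "?f (s (3*q+3)) 1 = s (3*q+2)" "?f (s (3*q+3)) 2 = s (3*q+1)"
      using tri_graph_triangle[OF n1 s, of "3*q+3"] k vals by auto
  qed
  then have "(\<Sum>q<?m. 2) \<le> (\<Sum>q<?m. mismatches ?f g (s (3*q+1)) + mismatches ?f g (s (3*q+2))
      + mismatches ?f g (s (3*q+3)))"
    by (intro sum_mono) auto
  then show ?thesis unfolding sum_triples by simp
qed

lemma far_tri_graph:
  assumes n: "4 \<le> n" and s: "s permutes {1..n}"
  shows "far 2 n (1/3) (tri_graph n s)"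
  unfolding far_def
proof (intro allI impI)
  fix g assume "in_P 2 n g"
  then have g: "valid_graph 2 n g" and cg: "connected_graph 2 n g" unfolding in_P_def by auto
  let ?f = "tri_graph n s" and ?m = "num_triangles n"
  have n1: "1 \<le> n" using n by simp
  have m3: "3 * ?m < n" using three_num_triangles_less[OF n1] .
  have inV: "\<And>k. k \<in> {1..n} \<Longrightarrow> s k \<in> {1..n}" using permutes_facts[OF s] by blast
  have triangles: "2 * ?m \<le> (\<Sum>k\<in>{1..3*?m}. mismatches ?f g (s k))"
    by (rule triangles_mismatches[OF n s g cg])
  have isolated: "n - 3 * ?m \<le> (\<Sum>k\<in>{3*?m+1..n}. mismatches ?f g (s k))"
  proof -
    have "1 \<le> mismatches ?f g (s k)" if k: "k \<in> {3*?m+1..n}" for k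
      using tri_graph_isolated[OF s, of k 1] connected_first_neighbour[OF g cg _ inV, of k] n k
      unfolding mismatches_def by auto
    then have "(\<Sum>k\<in>{3*?m+1..n}. 1) \<le> (\<Sum>k\<in>{3*?m+1..n}. mismatches ?f g (s k))"
      by (intro sum_mono) auto
    then show ?thesis by simp
  qed
  have "{1..n} = {1..3*?m} \<union> {3*?m+1..n}" using m3 by auto
  then have "(\<Sum>k\<in>{1..n}. mismatches ?f g (s k))
      = (\<Sum>k\<in>{1..3*?m}. mismatches ?f g (s k)) + (\<Sum>k\<in>{3*?m+1..n}. mismatches ?f g (s k))"
    by (simp add: sum.union_disjoint)
  then have "real n - real ?m \<le> real (card {(v, i). v \<in> {1..n} \<and> i \<in> {1..2} \<and> ?f v i \<noteq> g v i})"
    unfolding card_mismatches[OF s] using triangles isolated m3 by linarith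
  then show "1/3 < dist_d 2 n ?f g" unfolding dist_d_def using m3 by (simp add: field_simps)
qed

lemma in_P_ham_graph:
  assumes n: "3 \<le> n" and s: "s permutes {1..n}"
  shows "in_P 2 n (ham_graph n s)"
proof -
  have n1: "1 \<le> n" using n by simp
  let ?r = "conj_perm s (ham_perm n)" and ?E = "adj 2 (ham_graph n s)"
  have r: "?r permutes {1..n}" using conj_perm_permutes[OF s ham_perm_permutes[OF n1]] .
  have inj: "\<And>a b. s a = s b \<longleftrightarrow> a = b" and inV: "\<And>k. k \<in> {1..n} \<Longrightarrow> s k \<in> {1..n}"
    using permutes_facts[OF s] by blast+
  have step: "?E (s k) (s (ham_perm n k))" if k: "k \<in> {1..n}" for k
  proof -
    have "ham_perm n k \<noteq> k" using k n unfolding ham_perm_def by auto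
    then show ?thesis unfolding ham_graph_def
      using adj_perm_graph[OF r] inV[OF k] conj_perm_apply[OF s] inj by auto
  qed
  have forward: "?E\<^sup>*\<^sup>* (s k) (s (k + d))" if "k \<in> {1..n}" "k + d \<le> n" for k d
    using that
  proof (induction d)
    case (Suc d)
    then have "?E (s (k + d)) (s (k + Suc d))" using step[of "k + d"] unfolding ham_perm_def by auto
    with Suc show ?case by (simp add: rtranclp.rtrancl_into_rtrancl)
  qed simp
  have "?E\<^sup>*\<^sup>* u w" if u: "u \<in> {1..n}" and w: "w \<in> {1..n}" for u w
  proof -
    obtain k where k: "k \<in> {1..n}" "u = s k" using u permutes_facts(2,3)[OF s] by metis
    obtain j where j: "j \<in> {1..n}" "w = s j" using w permutes_facts(2,3)[OF s] by metis
    show ?thesis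
    proof (cases "k \<le> j")
      case True
      then show ?thesis using forward[OF k(1), of "j - k"] k j by auto
    next
      case False
      have "?E\<^sup>*\<^sup>* (s k) (s n)" using forward[OF k(1), of "n - k"] k by auto
      moreover have "?E (s n) (s 1)" using step[of n] n1 unfolding ham_perm_def by auto
      moreover have "?E\<^sup>*\<^sup>* (s 1) (s j)" using forward[of 1 "j - 1"] j n1 by auto
      ultimately show ?thesis using k j by (meson rtranclp.rtrancl_into_rtrancl rtranclp_trans)
    qed
  qed
  then show ?thesis unfolding in_P_def connected_graph_def
    using valid_perm_graph[OF r] unfolding ham_graph_def by auto
qed


section \<open>Coupling well-spread runs on the two graph families\<close>

definition is_matching :: "(nat \<times> nat) set \<Rightarrow> bool" where
  "is_matching M \<longleftrightarrow>
     (\<forall>a b c d. (a, b) \<in> M \<longrightarrow> (c, d) \<in> M \<longrightarrow> (a = c \<or> a = d \<or> b = c \<or> b = d) \<longrightarrow> a = c \<and> b = d)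
     \<and> (\<forall>a b. (a, b) \<in> M \<longrightarrow> a \<noteq> b)"

definition matching_swap :: "(nat \<times> nat) set \<Rightarrow> nat \<Rightarrow> nat" where
  "matching_swap M x = (if \<exists>y. (x, y) \<in> M then (THE y. (x, y) \<in> M)
                        else if \<exists>y. (y, x) \<in> M then (THE y. (y, x) \<in> M) else x)"

lemma matching_swap_pair:
  assumes M: "is_matching M" and ab: "(a, b) \<in> M"
  shows "matching_swap M a = b" "matching_swap M b = a"
proof -
  have "\<And>y. (a, y) \<in> M \<Longrightarrow> y = b" using M ab unfolding is_matching_def by blast
  then have "(THE y. (a, y) \<in> M) = b" using ab by blast
  then show "matching_swap M a = b" unfolding matching_swap_def using ab by auto
  have "\<And>y. (b, y) \<notin> M" using M ab unfolding is_matching_def by metis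
  moreover have "\<And>y. (y, b) \<in> M \<Longrightarrow> y = a" using M ab unfolding is_matching_def by blast
  then have "(THE y. (y, b) \<in> M) = a" using ab by blast
  ultimately show "matching_swap M b = a" unfolding matching_swap_def using ab by auto
qed

lemma matching_swap_unmatched: "(\<And>y. (x, y) \<notin> M \<and> (y, x) \<notin> M) \<Longrightarrow> matching_swap M x = x"
  unfolding matching_swap_def by auto

lemma matching_swap_cases:
  assumes "is_matching M"
  obtains y where "(x, y) \<in> M \<or> (y, x) \<in> M" "matching_swap M x = y" "matching_swap M y = x"
    | "\<And>y. (x, y) \<notin> M \<and> (y, x) \<notin> M" "matching_swap M x = x"
  using matching_swap_pair[OF assms] matching_swap_unmatched by metis

lemma matching_swap_involution: "is_matching M \<Longrightarrow> matching_swap M (matching_swap M x) = x"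
  by (cases rule: matching_swap_cases[of M x]) auto

lemma matching_swap_permutes:
  assumes M: "is_matching M" and S: "\<And>a b. (a, b) \<in> M \<Longrightarrow> a \<in> S \<and> b \<in> S"
  shows "matching_swap M permutes S"
proof (rule bij_imp_permutes)
  have "matching_swap M x \<in> S" if "x \<in> S" for x
    using S that by (cases rule: matching_swap_cases[OF M, of x]) auto
  then show "bij_betw (matching_swap M) S S"
    by (intro bij_betw_byWitness[where f'="matching_swap M"]) (auto simp: matching_swap_involution[OF M])
  show "\<And>x. x \<notin> S \<Longrightarrow> matching_swap M x = x"
    by (rule matching_swap_unmatched) (use S in blast)
qed

text \<open>The triangles are visited in the order 0, 1, .., m - 1 by the Hamiltonian cycle, and the
last one is followed by the isolated positions and then by the first one; when there is only one
isolated position the first and last triangle therefore share a neighbour on the cycle.\<close>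
definition cyc_adjacent :: "nat \<Rightarrow> nat \<Rightarrow> nat \<Rightarrow> bool" where
  "cyc_adjacent m q q' \<longleftrightarrow> q' = Suc q \<or> q = Suc q' \<or> (q = 0 \<and> q' = m - 1) \<or> (q' = 0 \<and> q = m - 1)"

definition well_spread :: "nat \<Rightarrow> nat set \<Rightarrow> bool" where
  "well_spread n P \<longleftrightarrow> P \<subseteq> {1..3 * num_triangles n} \<and>
     (\<forall>k\<in>P. \<forall>k'\<in>P. k \<noteq> k' \<longrightarrow>
        triangle_of k \<noteq> triangle_of k' \<and> \<not> cyc_adjacent (num_triangles n) (triangle_of k) (triangle_of k'))"

definition window :: "nat \<Rightarrow> nat \<Rightarrow> nat set" where
  "window n q = {ham_perm_inv n (3*q+1), 3*q+1, 3*q+2, 3*q+3, 3*q+4}"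

text \<open>At the first corner k of a triangle the cycle comes from ham_perm_inv n k while the
triangle comes from k + 2; at the last corner the cycle continues to k + 1 while the triangle
continues to k - 2.  Swapping these positions makes the cycle look like the triangle around k.\<close>
definition repair_pair :: "nat \<Rightarrow> nat \<Rightarrow> nat \<times> nat" where
  "repair_pair n k = (if corner k = 0 then (ham_perm_inv n k, k + 2) else (k - 2, k + 1))"

definition repair :: "nat \<Rightarrow> nat set \<Rightarrow> nat \<Rightarrow> nat" where
  "repair n P = matching_swap (repair_pair n ` {k \<in> P. corner k \<noteq> 1})"

lemma ham_perm_in_triangle:
  "1 \<le> n \<Longrightarrow> k \<in> {1..3 * num_triangles n} \<Longrightarrow>
    ham_perm_inv n k = (if k = 1 then n else k - 1) \<and> ham_perm n k = k + 1"
  using three_num_triangles_less[of n] unfolding ham_perm_inv_def ham_perm_def by auto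

lemma windows_disjoint:
  assumes n: "1 \<le> n" and m3: "3 \<le> num_triangles n"
    and q: "q < num_triangles n" "q' < num_triangles n" "q \<noteq> q'"
    and "\<not> cyc_adjacent (num_triangles n) q q'"
  shows "window n q \<inter> window n q' = {}"
proof -
  have "\<exists>r<3. n = 3 * num_triangles n + 1 + r"
    using n unfolding num_triangles_def by (intro exI[of _ "(n - 1) mod 3"]) auto
  then show ?thesis
    using assms unfolding window_def cyc_adjacent_def ham_perm_inv_def by (auto split: if_splits)
qed

lemma window_members:
  assumes n: "1 \<le> n" and k: "k \<in> {1..3 * num_triangles n}"
  shows "ham_perm_inv n k \<in> window n (triangle_of k)" "k \<in> window n (triangle_of k)"
    "ham_perm n k \<in> window n (triangle_of k)"
    "corner k \<noteq> 1 \<Longrightarrow> fst (repair_pair n k) \<in> window n (triangle_of k) \<and> snd (repair_pair n k) \<in> window n (triangle_of k)"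
proof -
  note decomp = triangle_corner_decomp[OF k] and cyc = ham_perm_in_triangle[OF n k]
  consider "corner k = 0" | "corner k = 1" | "corner k = 2" using decomp by linarith
  note c = this
  show "ham_perm_inv n k \<in> window n (triangle_of k)" using c decomp cyc unfolding window_def by cases auto
  show "k \<in> window n (triangle_of k)" using c decomp unfolding window_def by cases auto
  show "ham_perm n k \<in> window n (triangle_of k)" using c decomp cyc unfolding window_def by cases auto
  show "corner k \<noteq> 1 \<Longrightarrow> fst (repair_pair n k) \<in> window n (triangle_of k) \<and> snd (repair_pair n k) \<in> window n (triangle_of k)"
    using c decomp cyc unfolding window_def repair_pair_def by cases auto
qed

context
  fixes n :: nat and P :: "nat set"
  assumes n: "1 \<le> n" and m3: "3 \<le> num_triangles n" and spread: "well_spread n P"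
begin

private lemma P_sub: "P \<subseteq> {1..3 * num_triangles n}"
  using spread unfolding well_spread_def by auto

private lemma window_avoids_other_pairs:
  assumes "k \<in> P" "k' \<in> P" "k \<noteq> k'" "corner k' \<noteq> 1" "x \<in> window n (triangle_of k)"
  shows "x \<noteq> fst (repair_pair n k') \<and> x \<noteq> snd (repair_pair n k')"
proof -
  have "triangle_of k \<noteq> triangle_of k'" "\<not> cyc_adjacent (num_triangles n) (triangle_of k) (triangle_of k')"
    using spread assms(1-3) unfolding well_spread_def by auto
  moreover have "triangle_of k < num_triangles n" "triangle_of k' < num_triangles n"
    using triangle_corner_decomp P_sub assms(1,2) by blast+
  ultimately have "window n (triangle_of k) \<inter> window n (triangle_of k') = {}"
    using windows_disjoint[OF n m3] by blast
  then show ?thesis using window_members(4)[OF n, of k'] P_sub assms by blast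
qed

private lemma repair_pair_distinct:
  assumes "k \<in> P" "corner k \<noteq> 1"
  shows "fst (repair_pair n k) \<noteq> snd (repair_pair n k) \<and> k \<noteq> fst (repair_pair n k) \<and> k \<noteq> snd (repair_pair n k)"
proof -
  have k: "k \<in> {1..3 * num_triangles n}" using assms P_sub by auto
  show ?thesis using triangle_corner_decomp[OF k] ham_perm_in_triangle[OF n k] assms(2) k
      three_num_triangles_less[OF n] unfolding repair_pair_def by auto
qed

lemma is_matching_repair: "is_matching (repair_pair n ` {k \<in> P. corner k \<noteq> 1})"
  unfolding is_matching_def
proof (intro conjI allI impI)
  fix a b c d assume ab: "(a, b) \<in> repair_pair n ` {k \<in> P. corner k \<noteq> 1}"
    and cd: "(c, d) \<in> repair_pair n ` {k \<in> P. corner k \<noteq> 1}" and h: "a = c \<or> a = d \<or> b = c \<or> b = d"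
  obtain k where k: "k \<in> P" "corner k \<noteq> 1" "(a, b) = repair_pair n k" using ab by auto
  obtain k' where k': "k' \<in> P" "corner k' \<noteq> 1" "(c, d) = repair_pair n k'" using cd by auto
  have "k = k'"
  proof (rule ccontr)
    assume "k \<noteq> k'"
    moreover have "a \<in> window n (triangle_of k)" "b \<in> window n (triangle_of k)"
      using window_members(4)[OF n _ k(2)] P_sub k(1) k(3) by (metis fst_conv snd_conv subsetD)+
    ultimately show False using window_avoids_other_pairs[OF k(1) k'(1) _ k'(2)] k'(3) h
      by (metis fst_conv snd_conv)
  qed
  then show "a = c" "b = d" using k(3) k'(3) by (metis Pair_inject)+
next
  fix a b assume "(a, b) \<in> repair_pair n ` {k \<in> P. corner k \<noteq> 1}"
  then show "a \<noteq> b" using repair_pair_distinct by (auto, metis fst_conv snd_conv)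
qed

lemma repair_permutes: "repair n P permutes {1..n}"
  unfolding repair_def
proof (rule matching_swap_permutes[OF is_matching_repair])
  fix a b assume "(a, b) \<in> repair_pair n ` {k \<in> P. corner k \<noteq> 1}"
  then obtain k where k: "k \<in> P" "corner k \<noteq> 1" "(a, b) = repair_pair n k" by auto
  then have kk: "k \<in> {1..3 * num_triangles n}" using P_sub by auto
  show "a \<in> {1..n} \<and> b \<in> {1..n}"
    using triangle_corner_decomp[OF kk] ham_perm_in_triangle[OF n kk] k(2,3) kk three_num_triangles_less[OF n]
    unfolding repair_pair_def by (auto split: if_splits)
qed

lemma repair_involution: "repair n P (repair n P x) = x"
  unfolding repair_def by (rule matching_swap_involution[OF is_matching_repair])

private lemma repair_fixes_window:
  assumes k: "k \<in> P" and x: "x \<in> window n (triangle_of k)"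
    and own: "corner k \<noteq> 1 \<Longrightarrow> x \<noteq> fst (repair_pair n k) \<and> x \<noteq> snd (repair_pair n k)"
  shows "repair n P x = x"
  unfolding repair_def
proof (rule matching_swap_unmatched)
  fix y
  have "x \<noteq> fst (repair_pair n k') \<and> x \<noteq> snd (repair_pair n k')" if "k' \<in> P" "corner k' \<noteq> 1" for k'
    using that own window_avoids_other_pairs[OF k that(1) _ that(2) x] by (cases "k' = k") auto
  then show "(x, y) \<notin> repair_pair n ` {k \<in> P. corner k \<noteq> 1} \<and> (y, x) \<notin> repair_pair n ` {k \<in> P. corner k \<noteq> 1}"
    by (auto, metis fst_conv, metis snd_conv)
qed

lemma repair_fixes: "k \<in> P \<Longrightarrow> repair n P k = k"
  using repair_fixes_window window_members(2)[OF n] repair_pair_distinct P_sub by blast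

private lemma repair_swaps:
  "k \<in> P \<Longrightarrow> corner k \<noteq> 1 \<Longrightarrow> repair n P (fst (repair_pair n k)) = snd (repair_pair n k) \<and>
     repair n P (snd (repair_pair n k)) = fst (repair_pair n k)"
  unfolding repair_def using matching_swap_pair[OF is_matching_repair, of "fst (repair_pair n k)" "snd (repair_pair n k)"]
  by auto

private lemma corner_cases:
  assumes k: "k \<in> P"
  obtains q where "q < num_triangles n" "k = 3*q+1" "corner k = 0"
    | q where "q < num_triangles n" "k = 3*q+2" "corner k = 1"
    | q where "q < num_triangles n" "k = 3*q+3" "corner k = 2"
proof -
  have kk: "k \<in> {1..3 * num_triangles n}" using k P_sub by auto
  note decomp = triangle_corner_decomp[OF kk]
  consider "corner k = 0" | "corner k = 1" | "corner k = 2" using decomp by linarith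
  then show ?thesis using that decomp by cases (auto simp: numeral_3_eq_3)
qed

lemma repair_ham_perm_inv:
  assumes k: "k \<in> P" shows "repair n P (ham_perm_inv n k) = tri_perm_inv n k"
proof -
  have kk: "k \<in> {1..3 * num_triangles n}" using k P_sub by auto
  note cyc = ham_perm_in_triangle[OF n kk] and win = window_members(1)[OF n kk]
  show ?thesis
  proof (cases rule: corner_cases[OF k])
    case (1 q)
    then show ?thesis using repair_swaps[OF k] tri_perm_triangle[OF 1(1)] by (simp add: repair_pair_def)
  next
    case (2 q)
    then show ?thesis using tri_perm_triangle[OF 2(1)] cyc repair_fixes_window[OF k win] by simp
  next
    case (3 q)
    then show ?thesis using tri_perm_triangle[OF 3(1)] cyc repair_fixes_window[OF k win]
      by (simp add: repair_pair_def)
  qed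
qed

lemma repair_ham_perm:
  assumes k: "k \<in> P" shows "repair n P (ham_perm n k) = tri_perm n k"
proof -
  have kk: "k \<in> {1..3 * num_triangles n}" using k P_sub by auto
  note cyc = ham_perm_in_triangle[OF n kk] and win = window_members(3)[OF n kk]
  show ?thesis
  proof (cases rule: corner_cases[OF k])
    case (1 q)
    then show ?thesis using tri_perm_triangle[OF 1(1)] cyc repair_fixes_window[OF k win] m3
      three_num_triangles_less[OF n] by (simp add: repair_pair_def)
  next
    case (2 q)
    then show ?thesis using tri_perm_triangle[OF 2(1)] cyc repair_fixes_window[OF k win] by simp
  next
    case (3 q)
    then show ?thesis using repair_swaps[OF k] tri_perm_triangle[OF 3(1)] cyc by (simp add: repair_pair_def)
  qed
qed

end


definition perms :: "nat \<Rightarrow> (nat \<Rightarrow> nat) set" where "perms n = {s. s permutes {1..n}}"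

lemma finite_perms: "finite (perms n)"
  unfolding perms_def by (rule finite_permutations) simp

definition probed_positions :: "nat \<Rightarrow> qtree \<Rightarrow> (nat \<Rightarrow> nat) \<Rightarrow> nat set" where
  "probed_positions n t s = {k \<in> {1..n}. s k \<in> probed t (tri_graph n s)}"

definition coupled_perm :: "nat \<Rightarrow> qtree \<Rightarrow> (nat \<Rightarrow> nat) \<Rightarrow> nat \<Rightarrow> nat" where
  "coupled_perm n t s = s \<circ> repair n (probed_positions n t s)"

lemma
  assumes n: "1 \<le> n" and m3: "3 \<le> num_triangles n" and s: "s permutes {1..n}"
    and spread: "well_spread n (probed_positions n t s)"
  shows coupled_perm_permutes: "coupled_perm n t s permutes {1..n}"
    and run_ham_graph_coupled_perm: "run t (ham_graph n (coupled_perm n t s)) = run t (tri_graph n s)"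
proof -
  let ?P = "probed_positions n t s" and ?c = "coupled_perm n t s"
  note repair = repair_permutes[OF n m3 spread] repair_fixes[OF n m3 spread]
    repair_ham_perm[OF n m3 spread] repair_ham_perm_inv[OF n m3 spread]
  show c: "?c permutes {1..n}" unfolding coupled_perm_def by (rule permutes_compose[OF repair(1) s])
  have "tri_graph n s v i = ham_graph n ?c v i" if v: "v \<in> probed t (tri_graph n s)" for v i
  proof (cases "v \<in> {1..n}")
    case False
    then show ?thesis unfolding tri_graph_def ham_graph_def perm_graph_def by auto
  next
    case True
    obtain k where k: "k \<in> {1..n}" "v = s k" using True permutes_facts(2,3)[OF s] by metis
    have kP: "k \<in> ?P" unfolding probed_positions_def using k v by auto
    have ck: "?c k = v" unfolding coupled_perm_def using repair(2)[OF kP] k by simp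
    have "conj_perm ?c (ham_perm n) v = conj_perm s (tri_perm n) v"
      using conj_perm_apply[OF c, of "ham_perm n" k] conj_perm_apply[OF s, of "tri_perm n" k] ck k
        repair(3)[OF kP] by (simp add: coupled_perm_def)
    moreover have "inv (conj_perm ?c (ham_perm n)) v = inv (conj_perm s (tri_perm n)) v"
      using inv_conj_perm_apply[OF c ham_perm_permutes[OF n], of k]
        inv_conj_perm_apply[OF s tri_perm_permutes[OF n], of k] ck k repair(4)[OF kP]
      by (simp add: coupled_perm_def inv_ham_perm[OF n] inv_tri_perm[OF n])
    ultimately show ?thesis unfolding tri_graph_def ham_graph_def
      using perm_graph_cong[OF conj_perm_permutes[OF s tri_perm_permutes[OF n]]
          conj_perm_permutes[OF c ham_perm_permutes[OF n]]] by metis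
  qed
  then show "run t (ham_graph n ?c) = run t (tri_graph n s)" by (rule run_cong)
qed

lemma probed_positions_coupled_perm:
  assumes n: "1 \<le> n" and m3: "3 \<le> num_triangles n" and s: "s permutes {1..n}"
    and spread: "well_spread n (probed_positions n t s)"
  shows "probed_positions n t s
    = {k \<in> {1..n}. coupled_perm n t s k \<in> probed t (ham_graph n (coupled_perm n t s))}"
proof -
  let ?P = "probed_positions n t s" and ?d = "repair n (probed_positions n t s)"
  have probed_eq: "probed t (ham_graph n (coupled_perm n t s)) = probed t (tri_graph n s)"
    unfolding probed_def using run_ham_graph_coupled_perm[OF assms] by simp
  show ?thesis
  proof (rule set_eqI)
    fix k
    have "k \<in> ?P \<longleftrightarrow> k \<in> {1..n} \<and> s (?d k) \<in> probed t (tri_graph n s)"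
    proof
      assume "k \<in> ?P"
      then show "k \<in> {1..n} \<and> s (?d k) \<in> probed t (tri_graph n s)"
        using repair_fixes[OF n m3 spread] unfolding probed_positions_def by auto
    next
      assume k: "k \<in> {1..n} \<and> s (?d k) \<in> probed t (tri_graph n s)"
      then have dk: "?d k \<in> ?P"
        using permutes_in_image[OF repair_permutes[OF n m3 spread]] unfolding probed_positions_def by auto
      then have "?d (?d k) = ?d k" by (rule repair_fixes[OF n m3 spread])
      then show "k \<in> ?P" using dk repair_involution[OF n m3 spread, of k] by simp
    qed
    then show "k \<in> ?P \<longleftrightarrow> k \<in> {k \<in> {1..n}. coupled_perm n t s k \<in> probed t (ham_graph n (coupled_perm n t s))}"
      unfolding probed_eq unfolding coupled_perm_def by simp
  qed
qed

lemma inj_on_coupled_perm: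
  assumes n: "1 \<le> n" and m3: "3 \<le> num_triangles n"
  shows "inj_on (coupled_perm n t) {s \<in> perms n. well_spread n (probed_positions n t s)}"
proof (rule inj_onI)
  fix s1 s2
  assume s1: "s1 \<in> {s \<in> perms n. well_spread n (probed_positions n t s)}"
    and s2: "s2 \<in> {s \<in> perms n. well_spread n (probed_positions n t s)}"
    and eq: "coupled_perm n t s1 = coupled_perm n t s2"
  have p1: "s1 permutes {1..n}" "well_spread n (probed_positions n t s1)"
    and p2: "s2 permutes {1..n}" "well_spread n (probed_positions n t s2)"
    using s1 s2 unfolding perms_def by auto
  have P: "probed_positions n t s1 = probed_positions n t s2"
    using probed_positions_coupled_perm[OF n m3 p1] probed_positions_coupled_perm[OF n m3 p2] eq by simp
  have "s = coupled_perm n t s \<circ> repair n (probed_positions n t s)"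
    if "well_spread n (probed_positions n t s)" for s
    unfolding coupled_perm_def using repair_involution[OF n m3 that] by (simp add: fun_eq_iff)
  then show "s1 = s2" using p1(2) p2(2) eq P by metis
qed

lemma card_well_spread_output_le:
  assumes n: "1 \<le> n" and m3: "3 \<le> num_triangles n"
  shows "card {s \<in> perms n. snd (run t (tri_graph n s)) = b \<and> well_spread n (probed_positions n t s)}
    \<le> card {s \<in> perms n. snd (run t (ham_graph n s)) = b}"
proof (rule card_inj_on_le)
  show "inj_on (coupled_perm n t)
      {s \<in> perms n. snd (run t (tri_graph n s)) = b \<and> well_spread n (probed_positions n t s)}"
    by (rule inj_on_subset[OF inj_on_coupled_perm[OF n m3]]) auto
  show "coupled_perm n t ` {s \<in> perms n. snd (run t (tri_graph n s)) = b \<and> well_spread n (probed_positions n t s)}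
      \<subseteq> {s \<in> perms n. snd (run t (ham_graph n s)) = b}"
    using coupled_perm_permutes[OF n m3] run_ham_graph_coupled_perm[OF n m3] unfolding perms_def by auto
  show "finite {s \<in> perms n. snd (run t (ham_graph n s)) = b}" using finite_perms by simp
qed


section \<open>The privacy cost of moving a vertex\<close>

lemma detach_attach_eq_conj:
  assumes r: "r permutes S" and E: "r x = y" "r y = w" "r w = x" "r z = z"
    and D: "x \<noteq> y" "y \<noteq> w" "x \<noteq> w" "z \<noteq> x" "z \<noteq> y" "z \<noteq> w"
  shows "r \<circ> tr x w \<circ> tr z w = tr x z \<circ> r \<circ> tr x z"
proof
  fix u
  have inj: "\<And>a b. r a = r b \<longleftrightarrow> a = b" using permutes_inj[OF r] by (simp add: inj_eq)
  have "u \<notin> {x,y,w,z} \<Longrightarrow> r u \<noteq> x \<and> r u \<noteq> z" using inj[of u w] inj[of u z] E by auto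
  then show "(r \<circ> tr x w \<circ> tr z w) u = (tr x z \<circ> r \<circ> tr x z) u"
    using E D D[symmetric] by (cases "u \<in> {x,y,w,z}") (auto simp: transpose_def)
qed

lemma detach_attach_twice_eq_conj:
  assumes r: "r permutes S" and E: "r x = y" "r y = w" "r w = x" "r x' = y'" "r y' = w'" "r w' = x'"
    and D: "x \<noteq> y" "x \<noteq> w" "x \<noteq> x'" "x \<noteq> y'" "x \<noteq> w'" "y \<noteq> w" "y \<noteq> x'" "y \<noteq> y'" "y \<noteq> w'"
      "w \<noteq> x'" "w \<noteq> y'" "w \<noteq> w'" "x' \<noteq> y'" "x' \<noteq> w'" "y' \<noteq> w'"
  shows "r \<circ> tr x w \<circ> tr x' w' \<circ> tr x w' \<circ> tr x' w = tr x x' \<circ> r \<circ> tr x x'"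
proof
  fix u
  have inj: "\<And>a b. r a = r b \<longleftrightarrow> a = b" using permutes_inj[OF r] by (simp add: inj_eq)
  have "u \<notin> {x,y,w,x',y',w'} \<Longrightarrow> r u \<noteq> x \<and> r u \<noteq> x'" using inj[of u w] inj[of u w'] E by auto
  then show "(r \<circ> tr x w \<circ> tr x' w' \<circ> tr x w' \<circ> tr x' w) u = (tr x x' \<circ> r \<circ> tr x x') u"
    using E D D[symmetric] by (cases "u \<in> {x,y,w,x',y',w'}") (auto simp: transpose_def)
qed

lemma comp_transpose_permutes:
  "a \<in> {1..n} \<Longrightarrow> b \<in> {1..n} \<Longrightarrow> r permutes {1..n} \<Longrightarrow> r \<circ> tr a b permutes {1..n}"
  by (rule permutes_compose[OF permutes_swap_id]) auto

lemma conj_tri_perm_triangle: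
  assumes n1: "1 \<le> n" and s: "s permutes {1..n}" and p: "1 \<le> p" "p \<le> 3 * num_triangles n"
  defines "x \<equiv> s p" and "y \<equiv> s (tri_perm n p)" and "w \<equiv> s (tri_perm n (tri_perm n p))"
  shows "conj_perm s (tri_perm n) x = y" "conj_perm s (tri_perm n) y = w" "conj_perm s (tri_perm n) w = x"
    "x \<in> {1..n}" "y \<in> {1..n}" "w \<in> {1..n}" "x \<noteq> y" "y \<noteq> w" "x \<noteq> w"
proof -
  note pt = tri_perm_in_triangle[OF p]
  note pt2 = tri_perm_in_triangle[OF pt(1)[THEN conjunct1] pt(1)[THEN conjunct2]]
  show "conj_perm s (tri_perm n) x = y" "conj_perm s (tri_perm n) y = w" "conj_perm s (tri_perm n) w = x"
    unfolding x_def y_def w_def using conj_perm_apply[OF s, of "tri_perm n"] pt(4) by auto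
  show "x \<in> {1..n}" "y \<in> {1..n}" "w \<in> {1..n}"
    unfolding x_def y_def w_def using permutes_facts(1)[OF s] p pt(1) pt2(1) three_num_triangles_less[OF n1]
    by auto
  show "x \<noteq> y" "y \<noteq> w" "x \<noteq> w"
    unfolding x_def y_def w_def permutes_facts(6)[OF s] using pt(2,3) pt2(2) by auto
qed

text \<open>Exchanging a triangle position p with an isolated position q: detach the triangle at
s p, then attach s q to the remaining edge.\<close>
lemma access_tri_graph_swap_isolated:
  assumes DO: "diff_oblivious 2 n \<epsilon> \<delta> T" "0 \<le> \<epsilon>" "0 \<le> \<delta>" and n1: "1 \<le> n"
    and s: "s permutes {1..n}" and p: "1 \<le> p" "p \<le> 3 * num_triangles n"
    and q: "3 * num_triangles n < q" "q \<le> n"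
  shows "measure_pmf.prob (access T (tri_graph n s)) S
    \<le> exp (2 * \<epsilon>) * measure_pmf.prob (access T (tri_graph n (s \<circ> tr p q))) S + 2 * exp (2 * \<epsilon>) * \<delta>"
proof -
  let ?r = "conj_perm s (tri_perm n)"
  have r: "?r permutes {1..n}" by (rule conj_perm_permutes[OF s tri_perm_permutes[OF n1]])
  define x y w z where "x = s p" and "y = s (tri_perm n p)" and "w = s (tri_perm n (tri_perm n p))"
    and "z = s q"
  note T = conj_tri_perm_triangle[OF n1 s p, folded x_def y_def w_def]
  have "q \<noteq> p" "q \<noteq> tri_perm n p" "q \<noteq> tri_perm n (tri_perm n p)"
    using tri_perm_in_triangle(1)[OF p] tri_perm_in_triangle(1)[OF tri_perm_in_triangle(1)[OF p, THEN conjunct1]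
      tri_perm_in_triangle(1)[OF p, THEN conjunct2]] p q by auto
  then have z: "z \<in> {1..n}" "z \<noteq> x" "z \<noteq> y" "z \<noteq> w" "?r z = z"
    unfolding x_def y_def w_def z_def permutes_facts(6)[OF s]
    using permutes_facts(1)[OF s] q conj_perm_apply[OF s, of "tri_perm n" q] by (auto simp: tri_perm_def)
  define r1 where "r1 = ?r \<circ> tr x w"
  have r1: "r1 permutes {1..n}" unfolding r1_def by (rule comp_transpose_permutes[OF T(4,6) r])
  have nb1: "neighbouring 2 n (perm_graph n ?r) (perm_graph n r1)" unfolding r1_def
    by (rule neighbouring_detach[OF r T(4-9) T(1-3)])
  have nb2: "neighbouring 2 n (perm_graph n r1) (perm_graph n (r1 \<circ> tr z w))"
    by (rule neighbouring_attach[OF r1 z(1) T(5,6)]) (use T z in \<open>auto simp: r1_def\<close>)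
  have "r1 \<circ> tr z w = tr x z \<circ> ?r \<circ> tr x z"
    unfolding r1_def by (rule detach_attach_eq_conj[OF r T(1-3) z(5) T(7-9) z(2-4)])
  also have "\<dots> = conj_perm (s \<circ> tr p q) (tri_perm n)" unfolding x_def z_def
    by (rule conj_perm_comp_transpose[OF permutes_bij[OF s], symmetric])
  finally have "tri_graph n (s \<circ> tr p q) = perm_graph n (r1 \<circ> tr z w)" unfolding tri_graph_def by simp
  moreover have "measure_pmf.prob (access T (perm_graph n ?r)) S \<le> exp (2 * \<epsilon>)
      * measure_pmf.prob (access T (perm_graph n (r1 \<circ> tr z w))) S + 2 * exp (2 * \<epsilon>) * \<delta>"
    using diff_oblivious_path[OF DO, of "[perm_graph n ?r, perm_graph n r1, perm_graph n (r1 \<circ> tr z w)]"]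
      valid_perm_graph[OF r] valid_perm_graph[OF r1] valid_perm_graph[OF comp_transpose_permutes[OF z(1) T(6) r1]]
      nb1 nb2 by simp
  ultimately show ?thesis unfolding tri_graph_def by simp
qed

text \<open>Exchanging positions p and p' of two different triangles: detach both triangles, then
attach each of the two vertices to the other triangle's remaining edge.\<close>
lemma access_tri_graph_swap_triangles:
  assumes DO: "diff_oblivious 2 n \<epsilon> \<delta> T" "0 \<le> \<epsilon>" "0 \<le> \<delta>" and n1: "1 \<le> n"
    and s: "s permutes {1..n}" and p: "1 \<le> p" "p \<le> 3 * num_triangles n"
    and p': "1 \<le> p'" "p' \<le> 3 * num_triangles n" and b: "triangle_of p \<noteq> triangle_of p'"
  shows "measure_pmf.prob (access T (tri_graph n s)) S
    \<le> exp (4 * \<epsilon>) * measure_pmf.prob (access T (tri_graph n (s \<circ> tr p p'))) S + 4 * exp (4 * \<epsilon>) * \<delta>"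
proof -
  let ?r = "conj_perm s (tri_perm n)"
  have r: "?r permutes {1..n}" by (rule conj_perm_permutes[OF s tri_perm_permutes[OF n1]])
  define x y w where "x = s p" and "y = s (tri_perm n p)" and "w = s (tri_perm n (tri_perm n p))"
  define x' y' w' where "x' = s p'" and "y' = s (tri_perm n p')" and "w' = s (tri_perm n (tri_perm n p'))"
  note T = conj_tri_perm_triangle[OF n1 s p, folded x_def y_def w_def]
  note T' = conj_tri_perm_triangle[OF n1 s p', folded x'_def y'_def w'_def]
  have "a \<noteq> c" if "triangle_of a \<noteq> triangle_of c" for a c using that by auto
  then have "p \<noteq> p'" "p \<noteq> tri_perm n p'" "p \<noteq> tri_perm n (tri_perm n p')"
     "tri_perm n p \<noteq> p'" "tri_perm n p \<noteq> tri_perm n p'" "tri_perm n p \<noteq> tri_perm n (tri_perm n p')"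
     "tri_perm n (tri_perm n p) \<noteq> p'" "tri_perm n (tri_perm n p) \<noteq> tri_perm n p'"
     "tri_perm n (tri_perm n p) \<noteq> tri_perm n (tri_perm n p')"
    using b tri_perm_in_triangle(5,6)[OF p] tri_perm_in_triangle(5,6)[OF p'] by metis+
  then have cross: "x \<noteq> x'" "x \<noteq> y'" "x \<noteq> w'" "y \<noteq> x'" "y \<noteq> y'" "y \<noteq> w'" "w \<noteq> x'" "w \<noteq> y'" "w \<noteq> w'"
    unfolding x_def y_def w_def x'_def y'_def w'_def permutes_facts(6)[OF s] by auto
  note D = T(7-9) T'(7-9) cross
  note D' = D D[symmetric]
  define r1 where "r1 = ?r \<circ> tr x w"
  define r2 where "r2 = r1 \<circ> tr x' w'"
  define r3 where "r3 = r2 \<circ> tr x w'"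
  define r4 where "r4 = r3 \<circ> tr x' w"
  have r1: "r1 permutes {1..n}" unfolding r1_def by (rule comp_transpose_permutes[OF T(4,6) r])
  have r2: "r2 permutes {1..n}" unfolding r2_def by (rule comp_transpose_permutes[OF T'(4,6) r1])
  have r3: "r3 permutes {1..n}" unfolding r3_def by (rule comp_transpose_permutes[OF T(4) T'(6) r2])
  have r4: "r4 permutes {1..n}" unfolding r4_def by (rule comp_transpose_permutes[OF T'(4) T(6) r3])
  have nb1: "neighbouring 2 n (perm_graph n ?r) (perm_graph n r1)" unfolding r1_def
    by (rule neighbouring_detach[OF r T(4-9) T(1-3)])
  have nb2: "neighbouring 2 n (perm_graph n r1) (perm_graph n r2)" unfolding r2_def
    by (rule neighbouring_detach[OF r1 T'(4-9)]) (use D' T' in \<open>auto simp: r1_def\<close>)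
  have nb3: "neighbouring 2 n (perm_graph n r2) (perm_graph n r3)" unfolding r3_def
    by (rule neighbouring_attach[OF r2 T(4) T'(5,6)]) (use D' T T' in \<open>auto simp: r2_def r1_def\<close>)
  have nb4: "neighbouring 2 n (perm_graph n r3) (perm_graph n r4)" unfolding r4_def
    by (rule neighbouring_attach[OF r3 T'(4) T(5,6)]) (use D' T T' in \<open>auto simp: r3_def r2_def r1_def\<close>)
  have "r4 = tr x x' \<circ> ?r \<circ> tr x x'" unfolding r4_def r3_def r2_def r1_def
    by (rule detach_attach_twice_eq_conj[OF r T(1-3) T'(1-3)]) (use D in auto)
  also have "\<dots> = conj_perm (s \<circ> tr p p') (tri_perm n)" unfolding x_def x'_def
    by (rule conj_perm_comp_transpose[OF permutes_bij[OF s], symmetric])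
  finally have "tri_graph n (s \<circ> tr p p') = perm_graph n r4" unfolding tri_graph_def by simp
  moreover have "measure_pmf.prob (access T (perm_graph n ?r)) S
      \<le> exp (4 * \<epsilon>) * measure_pmf.prob (access T (perm_graph n r4)) S + 4 * exp (4 * \<epsilon>) * \<delta>"
    using diff_oblivious_path[OF DO,
        of "[perm_graph n ?r, perm_graph n r1, perm_graph n r2, perm_graph n r3, perm_graph n r4]"]
      valid_perm_graph[OF r] valid_perm_graph[OF r1] valid_perm_graph[OF r2] valid_perm_graph[OF r3]
      valid_perm_graph[OF r4] nb1 nb2 nb3 nb4 by simp
  ultimately show ?thesis unfolding tri_graph_def by simp
qed


section \<open>The events that break the coupling\<close>

lemma sum_perms_comp:
  assumes t: "t permutes {1..n}"
  shows "(\<Sum>s\<in>perms n. h (s \<circ> t)) = (\<Sum>s\<in>perms n. h s)"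
proof (rule sum.reindex_bij_witness[where i="\<lambda>s. s \<circ> inv t" and j="\<lambda>s. s \<circ> t"])
  fix a assume "a \<in> perms n"
  then show "a \<circ> inv t \<circ> t = a" "a \<circ> inv t \<in> perms n" "a \<circ> t \<circ> inv t = a" "a \<circ> t \<in> perms n"
    using permutes_inv_o[OF t] permutes_inv[OF t] t unfolding perms_def
    by (simp_all add: comp_assoc permutes_compose)
qed simp

text \<open>Exchanging triangles a and b corner by corner commutes with tri_perm, so it does not
change triangle graphs.\<close>
definition swap_triangles :: "nat \<Rightarrow> nat \<Rightarrow> nat \<Rightarrow> nat \<Rightarrow> nat" where
  "swap_triangles n a b x =
     (if 1 \<le> x \<and> x \<le> 3 * num_triangles n \<and> triangle_of x = a then 3 * b + corner x + 1
      else if 1 \<le> x \<and> x \<le> 3 * num_triangles n \<and> triangle_of x = b then 3 * a + corner x + 1 else x)"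

lemma swap_triangles_apply:
  assumes ab: "a < num_triangles n" "b < num_triangles n" and j: "j < 3"
  shows "swap_triangles n a b (3 * a + j + 1) = 3 * b + j + 1"
    "swap_triangles n a b (3 * b + j + 1) = 3 * a + j + 1"
    "c \<noteq> a \<Longrightarrow> c \<noteq> b \<Longrightarrow> swap_triangles n a b (3 * c + j + 1) = 3 * c + j + 1"
  using ab j triangle_of_corner[OF j, of a] triangle_of_corner[OF j, of b] triangle_of_corner[OF j, of c]
  unfolding swap_triangles_def by auto

lemma tri_perm_corner:
  assumes "1 \<le> x" "x \<le> 3 * num_triangles n"
  shows "tri_perm n x = 3 * triangle_of x + (corner x + 1) mod 3 + 1"
  using assms
proof (cases rule: position_cases[of x n])
  case (first q) then show ?thesis using tri_perm_triangle[OF first(1)] triangle_corner_of_triangle[of q] by simp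
next
  case (second q) then show ?thesis using tri_perm_triangle[OF second(1)] triangle_corner_of_triangle[of q] by simp
next
  case (third q) then show ?thesis using tri_perm_triangle[OF third(1)] triangle_corner_of_triangle[of q] by simp
qed auto

lemma swap_triangles_props:
  assumes ab: "a < num_triangles n" "b < num_triangles n"
  shows "swap_triangles n a b (swap_triangles n a b x) = x"
    "x \<in> {1..n} \<Longrightarrow> swap_triangles n a b x \<in> {1..n}"
    "tri_perm n (swap_triangles n a b x) = swap_triangles n a b (tri_perm n x)"
proof -
  have n1: "1 \<le> n" using ab unfolding num_triangles_def by (cases n) auto
  have "swap_triangles n a b (swap_triangles n a b x) = x \<and>
    (x \<in> {1..n} \<longrightarrow> swap_triangles n a b x \<in> {1..n}) \<and>
    tri_perm n (swap_triangles n a b x) = swap_triangles n a b (tri_perm n x)"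
  proof (cases "1 \<le> x \<and> x \<le> 3 * num_triangles n")
    case False
    then have "swap_triangles n a b x = x" "tri_perm n x = x"
      unfolding swap_triangles_def tri_perm_def by auto
    then show ?thesis by simp
  next
    case True
    define c j where "c = triangle_of x" and "j = corner x"
    have x: "x = 3 * c + j + 1" "c < num_triangles n" "j < 3"
      using triangle_corner_decomp[of x n] True unfolding c_def j_def by auto
    have j': "(j + 1) mod 3 < 3" by simp
    have tri_x: "tri_perm n x = 3 * c + (j + 1) mod 3 + 1"
      using tri_perm_corner True unfolding c_def j_def by simp
    have tri_d: "tri_perm n (3 * d + j + 1) = 3 * d + (j + 1) mod 3 + 1" if "d < num_triangles n" for d
    proof -
      have "3 * d + j + 1 \<le> 3 * num_triangles n" using that x(3) by linarith
      then show ?thesis using tri_perm_corner[of "3 * d + j + 1" n] triangle_of_corner[OF x(3), of d] by simp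
    qed
    have inV: "3 * d + i + 1 \<in> {1..n}" if "d < num_triangles n" "i < 3" for d i
      using three_num_triangles_less[OF n1] that by auto
    note sw = swap_triangles_apply[OF ab]
    consider "c = a" | "c \<noteq> a" "c = b" | "c \<noteq> a" "c \<noteq> b" by blast
    then show ?thesis
    proof cases
      case 1
      have "swap_triangles n a b x = 3 * b + j + 1" using sw(1)[OF x(3)] x 1 by simp
      moreover have "swap_triangles n a b (tri_perm n x) = 3 * b + (j + 1) mod 3 + 1"
        using sw(1)[OF j'] tri_x 1 by simp
      ultimately show ?thesis using sw(2)[OF x(3)] tri_d[OF ab(2)] inV[OF ab(2) x(3)] x 1 by simp
    next
      case 2
      have "swap_triangles n a b x = 3 * a + j + 1" using sw(2)[OF x(3)] x 2 by simp
      moreover have "swap_triangles n a b (tri_perm n x) = 3 * a + (j + 1) mod 3 + 1"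
        using sw(2)[OF j'] tri_x 2 by simp
      ultimately show ?thesis using sw(1)[OF x(3)] tri_d[OF ab(1)] inV[OF ab(1) x(3)] x 2 by simp
    next
      case 3
      have "swap_triangles n a b x = x" using sw(3)[OF x(3) 3] x by simp
      moreover have "swap_triangles n a b (tri_perm n x) = tri_perm n x" using sw(3)[OF j' 3] tri_x by simp
      ultimately show ?thesis by simp
    qed
  qed
  then show "swap_triangles n a b (swap_triangles n a b x) = x"
    "x \<in> {1..n} \<Longrightarrow> swap_triangles n a b x \<in> {1..n}"
    "tri_perm n (swap_triangles n a b x) = swap_triangles n a b (tri_perm n x)" by auto
qed

lemma swap_triangles_permutes:
  assumes ab: "a < num_triangles n" "b < num_triangles n"
  shows "swap_triangles n a b permutes {1..n}"
proof (rule bij_imp_permutes)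
  show "bij_betw (swap_triangles n a b) {1..n} {1..n}"
    by (rule bij_betw_byWitness[where f'="swap_triangles n a b"]) (use swap_triangles_props[OF ab] in auto)
  have "1 \<le> n" using ab unfolding num_triangles_def by (cases n) auto
  then show "\<And>x. x \<notin> {1..n} \<Longrightarrow> swap_triangles n a b x = x"
    using three_num_triangles_less[of n] unfolding swap_triangles_def by auto
qed

lemma tri_graph_comp_swap_triangles:
  assumes ab: "a < num_triangles n" "b < num_triangles n" and s: "s permutes {1..n}"
  shows "tri_graph n (s \<circ> swap_triangles n a b) = tri_graph n s"
proof -
  let ?b = "swap_triangles n a b"
  have n1: "1 \<le> n" using ab unfolding num_triangles_def by (cases n) auto
  have sb: "s \<circ> ?b permutes {1..n}" by (rule permutes_compose[OF swap_triangles_permutes[OF ab] s])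
  have "conj_perm (s \<circ> ?b) (tri_perm n) = conj_perm s (tri_perm n)"
  proof
    fix u
    show "conj_perm (s \<circ> ?b) (tri_perm n) u = conj_perm s (tri_perm n) u"
    proof (cases "u \<in> {1..n}")
      case False
      then show ?thesis
        using conj_perm_permutes[OF sb tri_perm_permutes[OF n1]] conj_perm_permutes[OF s tri_perm_permutes[OF n1]]
        by (simp add: permutes_not_in)
    next
      case True
      obtain k where k: "u = s k" using permutes_facts(3)[OF s] by metis
      then have "u = (s \<circ> ?b) (?b k)" using swap_triangles_props(1)[OF ab] by simp
      then have "conj_perm (s \<circ> ?b) (tri_perm n) u = s (?b (tri_perm n (?b k)))"
        using conj_perm_apply[OF sb, of "tri_perm n" "?b k"] by simp
      also have "\<dots> = s (tri_perm n k)" using swap_triangles_props[OF ab] by simp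
      finally show ?thesis using conj_perm_apply[OF s] k by simp
    qed
  qed
  then show ?thesis unfolding tri_graph_def by simp
qed

abbreviation tri_probed :: "nat \<Rightarrow> qtree \<Rightarrow> (nat \<Rightarrow> nat) \<Rightarrow> nat set" where
  "tri_probed n t s \<equiv> probed t (tri_graph n s)"

definition next_triangle :: "nat \<Rightarrow> nat \<Rightarrow> nat" where
  "next_triangle m q = (if Suc q = m then 0 else Suc q)"

definition triangle_probed :: "nat \<Rightarrow> qtree \<Rightarrow> (nat \<Rightarrow> nat) \<Rightarrow> nat \<Rightarrow> bool" where
  "triangle_probed n t s q \<longleftrightarrow> (\<exists>j<3. s (3 * q + j + 1) \<in> tri_probed n t s)"

definition isolated_hits :: "nat \<Rightarrow> qtree \<Rightarrow> (nat \<Rightarrow> nat) \<Rightarrow> real" where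
  "isolated_hits n t s = (\<Sum>q\<in>{3 * num_triangles n + 1..n}. of_bool (s q \<in> tri_probed n t s))"

definition same_triangle_hits :: "nat \<Rightarrow> qtree \<Rightarrow> (nat \<Rightarrow> nat) \<Rightarrow> real" where
  "same_triangle_hits n t s = (\<Sum>p\<in>{1..3 * num_triangles n}. of_bool (s p \<in> tri_probed n t s \<and>
       (s (tri_perm n p) \<in> tri_probed n t s \<or> s (tri_perm n (tri_perm n p)) \<in> tri_probed n t s)))"

definition adjacent_triangle_hits :: "nat \<Rightarrow> qtree \<Rightarrow> (nat \<Rightarrow> nat) \<Rightarrow> real" where
  "adjacent_triangle_hits n t s = (\<Sum>q<num_triangles n.
     of_bool (triangle_probed n t s q \<and> triangle_probed n t s (next_triangle (num_triangles n) q)))"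

lemma same_triangle:
  assumes k: "1 \<le> k" "k \<le> 3 * num_triangles n" and k': "1 \<le> k'" "k' \<le> 3 * num_triangles n"
    and same: "triangle_of k = triangle_of k'"
  shows "k' = k \<or> k' = tri_perm n k \<or> k' = tri_perm n (tri_perm n k)"
proof -
  have "k' = 3 * triangle_of k + corner k' + 1" "corner k' < 3"
    using triangle_corner_decomp[of k' n] k' same by auto
  then have k'_cases: "k' \<in> {3 * triangle_of k + 1, 3 * triangle_of k + 2, 3 * triangle_of k + 3}"
    by (auto simp: less_Suc_eq numeral_3_eq_3)
  show ?thesis using k
  proof (cases rule: position_cases[of k n])
    case (first q)
    then show ?thesis using k'_cases tri_perm_triangle[OF first(1)] triangle_corner_of_triangle[of q] by auto
  next
    case (second q)
    then show ?thesis using k'_cases tri_perm_triangle[OF second(1)] triangle_corner_of_triangle[of q] by auto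
  next
    case (third q)
    then show ?thesis using k'_cases tri_perm_triangle[OF third(1)] triangle_corner_of_triangle[of q] by auto
  qed auto
qed

lemma hits_nonneg:
  "0 \<le> isolated_hits n t s" "0 \<le> same_triangle_hits n t s" "0 \<le> adjacent_triangle_hits n t s"
  unfolding isolated_hits_def same_triangle_hits_def adjacent_triangle_hits_def by (auto intro: sum_nonneg)

lemma isolated_hits_ge_1:
  assumes "k \<in> probed_positions n t s" "k \<notin> {1..3 * num_triangles n}"
  shows "1 \<le> isolated_hits n t s"
  using assms member_le_sum[of k "{3 * num_triangles n + 1..n}" "\<lambda>q. of_bool (s q \<in> tri_probed n t s) :: real"]
  unfolding isolated_hits_def probed_positions_def by auto

lemma same_triangle_hits_ge_1:
  assumes P: "k \<in> probed_positions n t s" "k' \<in> probed_positions n t s" "k \<noteq> k'"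
    and k: "k \<in> {1..3 * num_triangles n}" "k' \<in> {1..3 * num_triangles n}"
    and same: "triangle_of k = triangle_of k'"
  shows "1 \<le> same_triangle_hits n t s"
proof -
  let ?W = "tri_probed n t s"
  have "k' = tri_perm n k \<or> k' = tri_perm n (tri_perm n k)"
    using same_triangle[of k n k'] assms by auto
  then have "s k \<in> ?W \<and> (s (tri_perm n k) \<in> ?W \<or> s (tri_perm n (tri_perm n k)) \<in> ?W)"
    using P unfolding probed_positions_def by blast
  then show ?thesis unfolding same_triangle_hits_def
    using member_le_sum[of k "{1..3 * num_triangles n}" "\<lambda>p. of_bool (s p \<in> ?W \<and>
       (s (tri_perm n p) \<in> ?W \<or> s (tri_perm n (tri_perm n p)) \<in> ?W)) :: real"] k(1) by simp
qed

lemma probed_position_triangle_probed: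
  assumes "k \<in> probed_positions n t s" "k \<in> {1..3 * num_triangles n}"
  shows "triangle_probed n t s (triangle_of k)"
proof -
  have "3 * triangle_of k + corner k + 1 = k" "corner k < 3"
    using triangle_corner_decomp[OF assms(2)] by auto
  moreover have "s k \<in> tri_probed n t s" using assms(1) unfolding probed_positions_def by blast
  ultimately show ?thesis unfolding triangle_probed_def by metis
qed

lemma adjacent_triangle_hits_ge_1:
  assumes m3: "3 \<le> num_triangles n"
    and P: "k \<in> probed_positions n t s" "k' \<in> probed_positions n t s"
    and k: "k \<in> {1..3 * num_triangles n}" "k' \<in> {1..3 * num_triangles n}"
    and adjacent: "cyc_adjacent (num_triangles n) (triangle_of k) (triangle_of k')"
  shows "1 \<le> adjacent_triangle_hits n t s"
proof -
  let ?m = "num_triangles n"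
  have probed: "triangle_probed n t s (triangle_of k)" "triangle_probed n t s (triangle_of k')"
    using probed_position_triangle_probed P k by blast+
  have tri: "triangle_of k < ?m" "triangle_of k' < ?m"
    using triangle_corner_decomp[OF k(1)] triangle_corner_decomp[OF k(2)] by blast+
  have next_tri: "next_triangle ?m q = (if Suc q = ?m then 0 else Suc q)" for q
    unfolding next_triangle_def ..
  have "\<exists>q<?m. triangle_probed n t s q \<and> triangle_probed n t s (next_triangle ?m q)"
    using adjacent unfolding cyc_adjacent_def
  proof (elim disjE)
    assume "triangle_of k' = Suc (triangle_of k)"
    then show ?thesis using probed tri next_tri[of "triangle_of k"] by (intro exI[of _ "triangle_of k"]) auto
  next
    assume "triangle_of k = Suc (triangle_of k')"
    then show ?thesis using probed tri next_tri[of "triangle_of k'"] by (intro exI[of _ "triangle_of k'"]) auto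
  next
    assume "triangle_of k = 0 \<and> triangle_of k' = ?m - 1"
    then show ?thesis using probed tri next_tri[of "triangle_of k'"] m3 by (intro exI[of _ "triangle_of k'"]) auto
  next
    assume "triangle_of k' = 0 \<and> triangle_of k = ?m - 1"
    then show ?thesis using probed tri next_tri[of "triangle_of k"] m3 by (intro exI[of _ "triangle_of k"]) auto
  qed
  then obtain q where "q < ?m" "triangle_probed n t s q" "triangle_probed n t s (next_triangle ?m q)"
    by blast
  then show ?thesis unfolding adjacent_triangle_hits_def
    using member_le_sum[of q "{..<?m}" "\<lambda>q. of_bool (triangle_probed n t s q \<and>
       triangle_probed n t s (next_triangle ?m q)) :: real"] by simp
qed

lemma not_well_spread_hits:
  assumes m3: "3 \<le> num_triangles n" and bad: "\<not> well_spread n (probed_positions n t s)"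
  shows "1 \<le> isolated_hits n t s + same_triangle_hits n t s + adjacent_triangle_hits n t s"
proof -
  let ?m = "num_triangles n" and ?P = "probed_positions n t s"
  have "(\<exists>k. k \<in> ?P \<and> k \<notin> {1..3 * ?m}) \<or>
    (\<exists>k k'. k \<in> ?P \<and> k' \<in> ?P \<and> k \<noteq> k' \<and> k \<in> {1..3 * ?m} \<and> k' \<in> {1..3 * ?m} \<and>
       (triangle_of k = triangle_of k' \<or> cyc_adjacent ?m (triangle_of k) (triangle_of k')))"
    using bad unfolding well_spread_def by blast
  then have "1 \<le> isolated_hits n t s \<or> 1 \<le> same_triangle_hits n t s \<or> 1 \<le> adjacent_triangle_hits n t s"
    using isolated_hits_ge_1 same_triangle_hits_ge_1 adjacent_triangle_hits_ge_1[OF m3] by blast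
  then show ?thesis using hits_nonneg[of n t s] by linarith
qed


section \<open>Expected number of bad events\<close>

definition probes_below :: "nat \<Rightarrow> qtree pmf \<Rightarrow> real \<Rightarrow> bool" where
  "probes_below n T L \<longleftrightarrow> (\<forall>f. valid_graph 2 n f \<longrightarrow> (\<forall>t\<in>set_pmf T. real (num_probes t f) < L))"

lemma card_tri_probed_le:
  assumes "probes_below n T L" "1 \<le> n" "s permutes {1..n}" "t \<in> set_pmf T"
  shows "real (card (tri_probed n t s)) \<le> L"
proof -
  have "real (num_probes t (tri_graph n s)) < L"
    using assms valid_tri_graph[of n s] unfolding probes_below_def by blast
  then show ?thesis using card_probed_le[of t "tri_graph n s"] by linarith
qed

lemma sum_of_bool_inj_le_card:
  assumes "inj_on h A" "finite W"
  shows "(\<Sum>p\<in>A. of_bool (h p \<in> W) :: real) \<le> real (card W)"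
proof (cases "finite A")
  case True
  then have "(\<Sum>p\<in>A. of_bool (h p \<in> W) :: real) = real (card (A \<inter> {p. h p \<in> W}))" by simp
  also have "card (A \<inter> {p. h p \<in> W}) = card (h ` (A \<inter> {p. h p \<in> W}))"
    by (rule card_image[symmetric]) (rule inj_on_subset[OF assms(1)], auto)
  also have "\<dots> \<le> card W" by (rule card_mono[OF assms(2)]) auto
  finally show ?thesis by simp
qed simp

lemma sum_positions_probed_le:
  assumes "inj_on s A" "probes_below n T L" "1 \<le> n" "s permutes {1..n}" "t \<in> set_pmf T"
  shows "(\<Sum>p\<in>A. of_bool (s p \<in> tri_probed n t s) :: real) \<le> L"
  using sum_of_bool_inj_le_card[OF assms(1) finite_probed[of t "tri_graph n s"]]
    card_tri_probed_le[OF assms(2-5)] by linarith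

lemma expectation_of_bool_nonneg: "0 \<le> measure_pmf.expectation T (\<lambda>t. of_bool (P t) :: real)"
  by (rule integral_nonneg_AE) auto

lemma expectation_sum_of_bool:
  "measure_pmf.expectation T (\<lambda>t. \<Sum>i\<in>I. of_bool (P i t) :: real)
    = (\<Sum>i\<in>I. measure_pmf.expectation T (\<lambda>t. of_bool (P i t)))"
  by (rule Bochner_Integration.integral_sum) (rule integrable_of_bool_pmf)

lemma expectation_sum_sum_of_bool:
  "measure_pmf.expectation T (\<lambda>t. \<Sum>i\<in>I. \<Sum>j\<in>J. of_bool (P i j t) :: real)
    = (\<Sum>i\<in>I. \<Sum>j\<in>J. measure_pmf.expectation T (\<lambda>t. of_bool (P i j t)))"
  by (subst Bochner_Integration.integral_sum)
    (auto intro: integrable_of_bool_pmf simp: expectation_sum_of_bool)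

lemma expectation_le_pointwise:
  fixes g :: "qtree \<Rightarrow> real"
  assumes "integrable (measure_pmf T) g" "\<And>t. t \<in> set_pmf T \<Longrightarrow> g t \<le> c"
  shows "measure_pmf.expectation T g \<le> c"
  using assms by (intro measure_pmf.integral_le_const) (auto intro: AE_pmfI)

text \<open>All triangle positions together are probed at most L times per run, whatever s is.\<close>
lemma sum_triangle_positions_probed_le:
  assumes fast: "probes_below n T L" and n1: "1 \<le> n"
  shows "(\<Sum>p\<in>{1..3 * num_triangles n}. \<Sum>s\<in>perms n.
      measure_pmf.expectation T (\<lambda>t. of_bool (s p \<in> tri_probed n t s))) \<le> real (card (perms n)) * L"
proof -
  have "(\<Sum>p\<in>{1..3 * num_triangles n}. \<Sum>s\<in>perms n.
      measure_pmf.expectation T (\<lambda>t. of_bool (s p \<in> tri_probed n t s)))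
    = measure_pmf.expectation T (\<lambda>t. \<Sum>s\<in>perms n. \<Sum>p\<in>{1..3 * num_triangles n}.
        of_bool (s p \<in> tri_probed n t s) :: real)"
    by (subst sum.swap) (rule expectation_sum_sum_of_bool[symmetric])
  also have "\<dots> \<le> (\<Sum>s\<in>perms n. L)"
  proof (rule expectation_le_pointwise)
    show "integrable (measure_pmf T) (\<lambda>t. \<Sum>s\<in>perms n. \<Sum>p\<in>{1..3 * num_triangles n}.
        of_bool (s p \<in> tri_probed n t s) :: real)"
      by (intro Bochner_Integration.integrable_sum integrable_of_bool_pmf)
    fix t assume t: "t \<in> set_pmf T"
    show "(\<Sum>s\<in>perms n. \<Sum>p\<in>{1..3 * num_triangles n}. of_bool (s p \<in> tri_probed n t s)) \<le> (\<Sum>s\<in>perms n. L)"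
    proof (rule sum_mono)
      fix s assume "s \<in> perms n"
      then have s: "s permutes {1..n}" unfolding perms_def by simp
      show "(\<Sum>p\<in>{1..3 * num_triangles n}. of_bool (s p \<in> tri_probed n t s)) \<le> L"
        by (rule sum_positions_probed_le[OF _ fast n1 s t]) (use permutes_inj_on[OF s] in blast)
    qed
  qed
  finally show ?thesis by simp
qed

lemma isolated_step:
  assumes DO: "diff_oblivious 2 n \<epsilon> \<delta> T" "0 \<le> \<epsilon>" "0 \<le> \<delta>" and n1: "1 \<le> n"
    and p: "1 \<le> p" "p \<le> 3 * num_triangles n" and q: "3 * num_triangles n < q" "q \<le> n"
  shows "(\<Sum>s\<in>perms n. measure_pmf.expectation T (\<lambda>t. of_bool (s q \<in> tri_probed n t s)))
     \<le> exp (2 * \<epsilon>) * (\<Sum>s\<in>perms n. measure_pmf.expectation T (\<lambda>t. of_bool (s p \<in> tri_probed n t s)))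
        + real (card (perms n)) * (2 * exp (2 * \<epsilon>) * \<delta>)"
proof -
  let ?t = "tr p q" and ?E = "\<lambda>s p. measure_pmf.expectation T (\<lambda>t. of_bool (s p \<in> tri_probed n t s))"
  have t: "?t permutes {1..n}" by (rule permutes_swap_id) (use p q in auto)
  have "?E s q \<le> exp (2 * \<epsilon>) * ?E (s \<circ> ?t) p + 2 * exp (2 * \<epsilon>) * \<delta>" if s: "s \<in> perms n" for s
  proof -
    let ?S = "{ps. \<exists>i. (s q, i) \<in> set ps}"
    have "?E s q = measure_pmf.prob (access T (tri_graph n s)) ?S"
      unfolding prob_access probed_def by simp
    moreover have "?E (s \<circ> ?t) p = measure_pmf.prob (access T (tri_graph n (s \<circ> ?t))) ?S"
      unfolding prob_access probed_def by simp
    ultimately show ?thesis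
      using access_tri_graph_swap_isolated[OF DO n1 _ p q] s unfolding perms_def by simp
  qed
  then have "(\<Sum>s\<in>perms n. ?E s q) \<le> (\<Sum>s\<in>perms n. exp (2 * \<epsilon>) * ?E (s \<circ> ?t) p + 2 * exp (2 * \<epsilon>) * \<delta>)"
    by (rule sum_mono)
  also have "\<dots> = exp (2 * \<epsilon>) * (\<Sum>s\<in>perms n. ?E (s \<circ> ?t) p) + real (card (perms n)) * (2 * exp (2 * \<epsilon>) * \<delta>)"
    by (simp add: sum.distrib sum_distrib_left)
  also have "(\<Sum>s\<in>perms n. ?E (s \<circ> ?t) p) = (\<Sum>s\<in>perms n. ?E s p)"
    by (rule sum_perms_comp[OF t, where h="\<lambda>s. ?E s p"])
  finally show ?thesis .
qed

text \<open>Each isolated position is probed about as often as an average triangle position.\<close>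
lemma isolated_hits_bound:
  assumes DO: "diff_oblivious 2 n \<epsilon> \<delta> T" "0 \<le> \<epsilon>" "0 \<le> \<delta>" and n1: "1 \<le> n"
    and m1: "1 \<le> num_triangles n" and fast: "probes_below n T L"
  shows "(\<Sum>s\<in>perms n. measure_pmf.expectation T (\<lambda>t. isolated_hits n t s))
     \<le> real (n - 3 * num_triangles n) * (exp (2 * \<epsilon>) * (real (card (perms n)) * L) / real (3 * num_triangles n)
          + real (card (perms n)) * (2 * exp (2 * \<epsilon>) * \<delta>))"
proof -
  let ?N = "real (card (perms n))" and ?c = "2 * exp (2 * \<epsilon>) * \<delta>" and ?M = "real (3 * num_triangles n)"
  let ?X = "\<lambda>q. \<Sum>s\<in>perms n. measure_pmf.expectation T (\<lambda>t. of_bool (s q \<in> tri_probed n t s))"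
  have "?X q \<le> exp (2 * \<epsilon>) * (?N * L) / ?M + ?N * ?c" if q: "q \<in> {3 * num_triangles n + 1..n}" for q
  proof -
    have "?M * ?X q = (\<Sum>p\<in>{1..3 * num_triangles n}. ?X q)" by simp
    also have "\<dots> \<le> (\<Sum>p\<in>{1..3 * num_triangles n}. exp (2 * \<epsilon>)
        * (\<Sum>s\<in>perms n. measure_pmf.expectation T (\<lambda>t. of_bool (s p \<in> tri_probed n t s))) + ?N * ?c)"
      by (rule sum_mono, rule isolated_step[OF DO n1]) (use q in auto)
    also have "\<dots> = exp (2 * \<epsilon>) * (\<Sum>p\<in>{1..3 * num_triangles n}. \<Sum>s\<in>perms n.
        measure_pmf.expectation T (\<lambda>t. of_bool (s p \<in> tri_probed n t s))) + ?M * (?N * ?c)"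
      by (simp add: sum.distrib sum_distrib_left)
    also have "\<dots> \<le> exp (2 * \<epsilon>) * (?N * L) + ?M * (?N * ?c)"
      using sum_triangle_positions_probed_le[OF fast n1] by (intro add_right_mono mult_left_mono) auto
    finally show ?thesis using m1 by (simp add: field_simps)
  qed
  then have "(\<Sum>q\<in>{3 * num_triangles n + 1..n}. ?X q)
      \<le> (\<Sum>q\<in>{3 * num_triangles n + 1..n}. exp (2 * \<epsilon>) * (?N * L) / ?M + ?N * ?c)"
    by (rule sum_mono)
  moreover have "(\<Sum>s\<in>perms n. measure_pmf.expectation T (\<lambda>t. isolated_hits n t s))
      = (\<Sum>q\<in>{3 * num_triangles n + 1..n}. ?X q)"
    unfolding isolated_hits_def expectation_sum_of_bool by (rule sum.swap)
  ultimately show ?thesis by simp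
qed

definition probed_pair :: "nat \<Rightarrow> qtree \<Rightarrow> (nat \<Rightarrow> nat) \<Rightarrow> nat \<Rightarrow> nat \<Rightarrow> bool" where
  "probed_pair n t s p p' \<longleftrightarrow> s p' \<in> tri_probed n t s \<and>
     (s (tri_perm n p) \<in> tri_probed n t s \<or> s (tri_perm n (tri_perm n p)) \<in> tri_probed n t s)"

lemma same_triangle_step:
  assumes DO: "diff_oblivious 2 n \<epsilon> \<delta> T" "0 \<le> \<epsilon>" "0 \<le> \<delta>" and n1: "1 \<le> n"
    and p: "1 \<le> p" "p \<le> 3 * num_triangles n" and p': "1 \<le> p'" "p' \<le> 3 * num_triangles n"
    and b: "triangle_of p \<noteq> triangle_of p'"
  shows "(\<Sum>s\<in>perms n. measure_pmf.expectation T (\<lambda>t. of_bool (probed_pair n t s p p)))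
     \<le> exp (4 * \<epsilon>) * (\<Sum>s\<in>perms n. measure_pmf.expectation T (\<lambda>t. of_bool (probed_pair n t s p p')))
        + real (card (perms n)) * (4 * exp (4 * \<epsilon>) * \<delta>)"
proof -
  let ?t = "tr p p'" and ?E = "\<lambda>s p'. measure_pmf.expectation T (\<lambda>t. of_bool (probed_pair n t s p p'))"
  have t: "?t permutes {1..n}"
    by (rule permutes_swap_id) (use p p' three_num_triangles_less[OF n1] in auto)
  note pt = tri_perm_in_triangle[OF p]
  have fixed: "(s \<circ> ?t) (tri_perm n p) = s (tri_perm n p)"
    "(s \<circ> ?t) (tri_perm n (tri_perm n p)) = s (tri_perm n (tri_perm n p))" for s
  proof -
    have "tri_perm n p \<noteq> p'" "tri_perm n (tri_perm n p) \<noteq> p'" using pt(5,6) b by metis+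
    then show "(s \<circ> ?t) (tri_perm n p) = s (tri_perm n p)"
      "(s \<circ> ?t) (tri_perm n (tri_perm n p)) = s (tri_perm n (tri_perm n p))" using pt(2,3) by auto
  qed
  have "?E s p \<le> exp (4 * \<epsilon>) * ?E (s \<circ> ?t) p' + 4 * exp (4 * \<epsilon>) * \<delta>" if s: "s \<in> perms n" for s
  proof -
    let ?S = "{ps. (\<exists>i. (s p, i) \<in> set ps) \<and>
      ((\<exists>i. (s (tri_perm n p), i) \<in> set ps) \<or> (\<exists>i. (s (tri_perm n (tri_perm n p)), i) \<in> set ps))}"
    have "?E s p = measure_pmf.prob (access T (tri_graph n s)) ?S"
      unfolding prob_access probed_pair_def probed_def by simp
    moreover have "?E (s \<circ> ?t) p' = measure_pmf.prob (access T (tri_graph n (s \<circ> ?t))) ?S"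
      unfolding prob_access probed_pair_def probed_def fixed by simp
    ultimately show ?thesis
      using access_tri_graph_swap_triangles[OF DO n1 _ p p' b] s unfolding perms_def by simp
  qed
  then have "(\<Sum>s\<in>perms n. ?E s p) \<le> (\<Sum>s\<in>perms n. exp (4 * \<epsilon>) * ?E (s \<circ> ?t) p' + 4 * exp (4 * \<epsilon>) * \<delta>)"
    by (rule sum_mono)
  also have "\<dots> = exp (4 * \<epsilon>) * (\<Sum>s\<in>perms n. ?E (s \<circ> ?t) p') + real (card (perms n)) * (4 * exp (4 * \<epsilon>) * \<delta>)"
    by (simp add: sum.distrib sum_distrib_left)
  also have "(\<Sum>s\<in>perms n. ?E (s \<circ> ?t) p') = (\<Sum>s\<in>perms n. ?E s p')"
    by (rule sum_perms_comp[OF t, where h="\<lambda>s. ?E s p'"])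
  finally show ?thesis .
qed

lemma card_other_triangles:
  assumes p: "1 \<le> p" "p \<le> 3 * num_triangles n"
  shows "card {p' \<in> {1..3 * num_triangles n}. triangle_of p' \<noteq> triangle_of p} = 3 * num_triangles n - 3"
proof -
  let ?c = "triangle_of p"
  let ?B = "{3 * ?c + 1, 3 * ?c + 2, 3 * ?c + 3}"
  have "{p' \<in> {1..3 * num_triangles n}. triangle_of p' \<noteq> ?c} = {1..3 * num_triangles n} - ?B"
  proof (intro set_eqI iffI)
    fix x assume "x \<in> {p' \<in> {1..3 * num_triangles n}. triangle_of p' \<noteq> ?c}"
    then show "x \<in> {1..3 * num_triangles n} - ?B" using triangle_corner_of_triangle[of ?c] by auto
  next
    fix x assume x: "x \<in> {1..3 * num_triangles n} - ?B"
    have "x = 3 * triangle_of x + corner x + 1" "corner x < 3" using triangle_corner_decomp[of x n] x by auto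
    then have "triangle_of x = ?c \<Longrightarrow> x \<in> ?B" by (auto simp: less_Suc_eq numeral_3_eq_3)
    then show "x \<in> {p' \<in> {1..3 * num_triangles n}. triangle_of p' \<noteq> ?c}" using x by auto
  qed
  moreover have "?B \<subseteq> {1..3 * num_triangles n}" using triangle_corner_decomp[of p n] p by auto
  ultimately show ?thesis by (simp add: card_Diff_subset)
qed

lemma sum_probed_pairs_pointwise_le:
  assumes fast: "probes_below n T L" and n1: "1 \<le> n" and s: "s permutes {1..n}" and t: "t \<in> set_pmf T"
  shows "(\<Sum>p\<in>{1..3 * num_triangles n}. \<Sum>p'\<in>{1..3 * num_triangles n}.
      of_bool (probed_pair n t s p p') :: real) \<le> 2 * L\<^sup>2"
proof -
  let ?A = "{1..3 * num_triangles n}" and ?W = "tri_probed n t s"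
  let ?first = "\<lambda>p. of_bool (s (tri_perm n p) \<in> ?W) + of_bool (s (tri_perm n (tri_perm n p)) \<in> ?W) :: real"
  have inj_tri: "inj (tri_perm n)" using permutes_inj[OF tri_perm_permutes[OF n1]] .
  have "inj (s \<circ> tri_perm n)" "inj (s \<circ> tri_perm n \<circ> tri_perm n)"
    using inj_compose[OF permutes_inj[OF s] inj_tri] inj_compose[OF _ inj_tri] by blast+
  then have inj: "inj_on (\<lambda>p. s (tri_perm n p)) ?A" "inj_on (\<lambda>p. s (tri_perm n (tri_perm n p))) ?A"
    unfolding comp_def by (blast intro: inj_on_subset)+
  have second: "(\<Sum>p'\<in>?A. of_bool (s p' \<in> ?W) :: real) \<le> L"
    by (rule sum_positions_probed_le[OF _ fast n1 s t]) (use permutes_inj_on[OF s] in blast)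
  have "(\<Sum>p\<in>?A. of_bool (s (tri_perm n p) \<in> ?W) :: real) \<le> real (card ?W)"
    by (rule sum_of_bool_inj_le_card[OF inj(1) finite_probed])
  moreover have "(\<Sum>p\<in>?A. of_bool (s (tri_perm n (tri_perm n p)) \<in> ?W) :: real) \<le> real (card ?W)"
    by (rule sum_of_bool_inj_le_card[OF inj(2) finite_probed])
  moreover have "(\<Sum>p\<in>?A. ?first p) = (\<Sum>p\<in>?A. of_bool (s (tri_perm n p) \<in> ?W))
      + (\<Sum>p\<in>?A. of_bool (s (tri_perm n (tri_perm n p)) \<in> ?W))"
    by (rule sum.distrib)
  ultimately have first: "(\<Sum>p\<in>?A. ?first p) \<le> 2 * L"
    using card_tri_probed_le[OF fast n1 s t] by linarith
  have nonneg: "0 \<le> (\<Sum>p'\<in>?A. of_bool (s p' \<in> ?W) :: real)" by (rule sum_nonneg) simp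
  have "(\<Sum>p\<in>?A. \<Sum>p'\<in>?A. of_bool (probed_pair n t s p p') :: real)
      \<le> (\<Sum>p\<in>?A. \<Sum>p'\<in>?A. ?first p * of_bool (s p' \<in> ?W))"
    by (intro sum_mono) (simp add: probed_pair_def)
  also have "\<dots> = (\<Sum>p\<in>?A. ?first p) * (\<Sum>p'\<in>?A. of_bool (s p' \<in> ?W))"
    by (rule sum_product[symmetric])
  also have "\<dots> \<le> (2 * L) * L"
    using first second nonneg by (intro mult_mono) linarith+
  also have "\<dots> = 2 * L\<^sup>2" by (simp add: power2_eq_square)
  finally show ?thesis .
qed

lemma sum_probed_pairs_le:
  assumes fast: "probes_below n T L" and n1: "1 \<le> n"
  shows "(\<Sum>p\<in>{1..3 * num_triangles n}. \<Sum>p'\<in>{1..3 * num_triangles n}. \<Sum>s\<in>perms n.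
      measure_pmf.expectation T (\<lambda>t. of_bool (probed_pair n t s p p'))) \<le> real (card (perms n)) * (2 * L\<^sup>2)"
proof -
  let ?A = "{1..3 * num_triangles n}"
  let ?g = "\<lambda>t s p p'. of_bool (probed_pair n t s p p') :: real"
  have "(\<Sum>p\<in>?A. \<Sum>p'\<in>?A. \<Sum>s\<in>perms n. measure_pmf.expectation T (\<lambda>t. ?g t s p p'))
      = (\<Sum>s\<in>perms n. \<Sum>p\<in>?A. \<Sum>p'\<in>?A. measure_pmf.expectation T (\<lambda>t. ?g t s p p'))"
    by (subst sum.swap, rule sum.cong[OF refl], rule sum.swap)
  also have "\<dots> = (\<Sum>s\<in>perms n. measure_pmf.expectation T (\<lambda>t. \<Sum>p\<in>?A. \<Sum>p'\<in>?A. ?g t s p p'))"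
    by (rule sum.cong[OF refl], rule expectation_sum_sum_of_bool[symmetric])
  also have "\<dots> \<le> (\<Sum>s\<in>perms n. 2 * L\<^sup>2)"
  proof (rule sum_mono)
    fix s assume "s \<in> perms n"
    then have s: "s permutes {1..n}" unfolding perms_def by simp
    show "measure_pmf.expectation T (\<lambda>t. \<Sum>p\<in>?A. \<Sum>p'\<in>?A. ?g t s p p') \<le> 2 * L\<^sup>2"
      by (rule expectation_le_pointwise)
        (intro Bochner_Integration.integrable_sum integrable_of_bool_pmf,
         rule sum_probed_pairs_pointwise_le[OF fast n1 s])
  qed
  finally show ?thesis by simp
qed

text \<open>Two positions of one triangle are probed together about as often as two positions of
different triangles; summed over all pairs of positions, the latter count is quadratic in the
number of probes.\<close>
lemma same_triangle_hits_bound: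
  assumes DO: "diff_oblivious 2 n \<epsilon> \<delta> T" "0 \<le> \<epsilon>" "0 \<le> \<delta>" and n1: "1 \<le> n"
    and m2: "2 \<le> num_triangles n" and fast: "probes_below n T L"
  shows "(\<Sum>s\<in>perms n. measure_pmf.expectation T (\<lambda>t. same_triangle_hits n t s))
     \<le> exp (4 * \<epsilon>) * (real (card (perms n)) * (2 * L\<^sup>2)) / real (3 * num_triangles n - 3)
        + real (3 * num_triangles n) * (real (card (perms n)) * (4 * exp (4 * \<epsilon>) * \<delta>))"
proof -
  let ?A = "{1..3 * num_triangles n}" and ?N = "real (card (perms n))" and ?c = "4 * exp (4 * \<epsilon>) * \<delta>"
  let ?K = "real (3 * num_triangles n - 3)"
  let ?Y = "\<lambda>p p'. \<Sum>s\<in>perms n. measure_pmf.expectation T (\<lambda>t. of_bool (probed_pair n t s p p') :: real)"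
  have K0: "0 < ?K" using m2 by simp
  have "?Y p p \<le> exp (4 * \<epsilon>) * (\<Sum>p'\<in>?A. ?Y p p') / ?K + ?N * ?c" if p: "p \<in> ?A" for p
  proof -
    let ?O = "{p' \<in> ?A. triangle_of p' \<noteq> triangle_of p}"
    have cO: "card ?O = 3 * num_triangles n - 3" using card_other_triangles p by auto
    have "?K * ?Y p p = (\<Sum>p'\<in>?O. ?Y p p)" using cO by simp
    also have "\<dots> \<le> (\<Sum>p'\<in>?O. exp (4 * \<epsilon>) * ?Y p p' + ?N * ?c)"
      by (rule sum_mono, rule same_triangle_step[OF DO n1]) (use p in auto)
    also have "\<dots> = exp (4 * \<epsilon>) * (\<Sum>p'\<in>?O. ?Y p p') + ?K * (?N * ?c)"
      using cO by (simp add: sum.distrib sum_distrib_left)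
    also have "\<dots> \<le> exp (4 * \<epsilon>) * (\<Sum>p'\<in>?A. ?Y p p') + ?K * (?N * ?c)"
      by (intro add_right_mono mult_left_mono sum_mono2) (auto intro: sum_nonneg expectation_of_bool_nonneg)
    finally show ?thesis using K0 by (simp add: field_simps)
  qed
  then have "(\<Sum>p\<in>?A. ?Y p p) \<le> (\<Sum>p\<in>?A. exp (4 * \<epsilon>) * (\<Sum>p'\<in>?A. ?Y p p') / ?K + ?N * ?c)"
    by (rule sum_mono)
  also have "\<dots> = exp (4 * \<epsilon>) * (\<Sum>p\<in>?A. \<Sum>p'\<in>?A. ?Y p p') / ?K + real (3 * num_triangles n) * (?N * ?c)"
    by (simp add: sum.distrib sum_distrib_left sum_divide_distrib)
  also have "\<dots> \<le> exp (4 * \<epsilon>) * (?N * (2 * L\<^sup>2)) / ?K + real (3 * num_triangles n) * (?N * ?c)"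
    using sum_probed_pairs_le[OF fast n1] K0 by (intro add_right_mono divide_right_mono mult_left_mono) auto
  finally have "(\<Sum>p\<in>?A. ?Y p p) \<le> exp (4 * \<epsilon>) * (?N * (2 * L\<^sup>2)) / ?K + real (3 * num_triangles n) * (?N * ?c)" .
  moreover have "(\<Sum>s\<in>perms n. measure_pmf.expectation T (\<lambda>t. same_triangle_hits n t s)) = (\<Sum>p\<in>?A. ?Y p p)"
    unfolding same_triangle_hits_def expectation_sum_of_bool probed_pair_def by (rule sum.swap)
  ultimately show ?thesis by simp
qed


lemma triangle_probed_iff:
  "triangle_probed n t s q \<longleftrightarrow>
    s (3*q+1) \<in> tri_probed n t s \<or> s (3*q+2) \<in> tri_probed n t s \<or> s (3*q+3) \<in> tri_probed n t s"
proof -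
  have "(\<exists>j<3. P (3 * q + j + 1)) \<longleftrightarrow> P (3*q+1) \<or> P (3*q+2) \<or> P (3*q+3)" for P :: "nat \<Rightarrow> bool"
    by (auto simp: less_Suc_eq numeral_3_eq_3)
  then show ?thesis unfolding triangle_probed_def .
qed

lemma sum_triangle_probed_le:
  assumes s: "s permutes {1..n}"
  shows "(\<Sum>q<num_triangles n. of_bool (triangle_probed n t s q) :: real) \<le> real (card (tri_probed n t s))"
proof -
  let ?W = "tri_probed n t s"
  have "(\<Sum>q<num_triangles n. of_bool (triangle_probed n t s q) :: real)
      \<le> (\<Sum>q<num_triangles n. of_bool (s (3*q+1) \<in> ?W) + of_bool (s (3*q+2) \<in> ?W) + of_bool (s (3*q+3) \<in> ?W))"
    unfolding triangle_probed_iff by (intro sum_mono) auto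
  also have "\<dots> = (\<Sum>p\<in>{1..3 * num_triangles n}. of_bool (s p \<in> ?W))"
    by (rule sum_triples[symmetric])
  also have "\<dots> \<le> real (card ?W)"
    by (rule sum_of_bool_inj_le_card) (use permutes_inj_on[OF s] finite_probed in auto)
  finally show ?thesis .
qed

text \<open>By the symmetry swap_triangles, a triangle and its successor are probed together as often
as any other two triangles.\<close>
lemma sum_next_triangle_probed_eq:
  assumes m2: "2 \<le> num_triangles n" and k: "k < num_triangles n"
    and k': "k' < num_triangles n" "k' \<noteq> k"
  shows "(\<Sum>s\<in>perms n. of_bool (triangle_probed n t s k \<and> triangle_probed n t s (next_triangle (num_triangles n) k)) :: real)
       = (\<Sum>s\<in>perms n. of_bool (triangle_probed n t s k \<and> triangle_probed n t s k'))"
proof (cases "k' = next_triangle (num_triangles n) k")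
  case False
  let ?a = "next_triangle (num_triangles n) k"
  have a: "?a < num_triangles n" "?a \<noteq> k" using k m2 unfolding next_triangle_def by auto
  let ?b = "swap_triangles n ?a k'"
  have b: "?b permutes {1..n}" by (rule swap_triangles_permutes[OF a(1) k'(1)])
  have "(\<Sum>s\<in>perms n. of_bool (triangle_probed n t s k \<and> triangle_probed n t s ?a) :: real)
      = (\<Sum>s\<in>perms n. of_bool (triangle_probed n t (s \<circ> ?b) k \<and> triangle_probed n t (s \<circ> ?b) ?a))"
    by (rule sum_perms_comp[OF b, symmetric])
  also have "\<dots> = (\<Sum>s\<in>perms n. of_bool (triangle_probed n t s k \<and> triangle_probed n t s k'))"
  proof (rule sum.cong[OF refl])
    fix s assume "s \<in> perms n"
    then have W: "tri_probed n t (s \<circ> ?b) = tri_probed n t s"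
      using tri_graph_comp_swap_triangles[OF a(1) k'(1)] unfolding perms_def by simp
    have "?b (3 * ?a + j + 1) = 3 * k' + j + 1" "?b (3 * k + j + 1) = 3 * k + j + 1" if "j < 3" for j
      using swap_triangles_apply[OF a(1) k'(1) that] a(2) k'(2) by auto
    then have "triangle_probed n t (s \<circ> ?b) ?a \<longleftrightarrow> triangle_probed n t s k'"
      "triangle_probed n t (s \<circ> ?b) k \<longleftrightarrow> triangle_probed n t s k"
      unfolding triangle_probed_def W by auto
    then show "(of_bool (triangle_probed n t (s \<circ> ?b) k \<and> triangle_probed n t (s \<circ> ?b) ?a) :: real)
        = of_bool (triangle_probed n t s k \<and> triangle_probed n t s k')" by simp
  qed
  finally show ?thesis .
qed simp

lemma sum_adjacent_triangle_hits_le: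
  assumes fast: "probes_below n T L" and n1: "1 \<le> n" and m2: "2 \<le> num_triangles n"
    and t: "t \<in> set_pmf T"
  shows "(\<Sum>s\<in>perms n. adjacent_triangle_hits n t s) \<le> real (card (perms n)) * L\<^sup>2 / real (num_triangles n - 1)"
proof -
  let ?m = "num_triangles n"
  let ?B = "\<lambda>s k. of_bool (triangle_probed n t s k) :: real"
  let ?A = "\<lambda>k. \<Sum>s\<in>perms n. of_bool (triangle_probed n t s k \<and> triangle_probed n t s (next_triangle ?m k)) :: real"
  have "real (?m - 1) * ?A k \<le> (\<Sum>k'<?m. \<Sum>s\<in>perms n. ?B s k * ?B s k')" if k: "k < ?m" for k
  proof -
    have "real (?m - 1) * ?A k = (\<Sum>k'\<in>{..<?m} - {k}. ?A k)" using k by simp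
    also have "\<dots> = (\<Sum>k'\<in>{..<?m} - {k}. \<Sum>s\<in>perms n. ?B s k * ?B s k')"
      by (rule sum.cong[OF refl]) (use sum_next_triangle_probed_eq[OF m2 k] in \<open>auto simp: of_bool_conj\<close>)
    also have "\<dots> \<le> (\<Sum>k'<?m. \<Sum>s\<in>perms n. ?B s k * ?B s k')"
      by (rule sum_mono2) (auto intro: sum_nonneg)
    finally show ?thesis .
  qed
  then have "real (?m - 1) * (\<Sum>k<?m. ?A k) \<le> (\<Sum>k<?m. \<Sum>k'<?m. \<Sum>s\<in>perms n. ?B s k * ?B s k')"
    unfolding sum_distrib_left by (intro sum_mono) auto
  also have "\<dots> = (\<Sum>k<?m. \<Sum>s\<in>perms n. \<Sum>k'<?m. ?B s k * ?B s k')"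
    by (rule sum.cong[OF refl], rule sum.swap)
  also have "\<dots> = (\<Sum>s\<in>perms n. \<Sum>k<?m. \<Sum>k'<?m. ?B s k * ?B s k')"
    by (rule sum.swap)
  also have "\<dots> = (\<Sum>s\<in>perms n. (\<Sum>k<?m. ?B s k) * (\<Sum>k'<?m. ?B s k'))"
    by (rule sum.cong[OF refl], rule sum_product[symmetric])
  also have "\<dots> \<le> (\<Sum>s\<in>perms n. L * L)"
  proof (rule sum_mono)
    fix s assume "s \<in> perms n"
    then have s: "s permutes {1..n}" unfolding perms_def by simp
    have "(\<Sum>k<?m. ?B s k) \<le> L"
      using sum_triangle_probed_le[OF s, of t] card_tri_probed_le[OF fast n1 s t] by linarith
    then show "(\<Sum>k<?m. ?B s k) * (\<Sum>k'<?m. ?B s k') \<le> L * L"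
      by (intro mult_mono) (auto intro: sum_nonneg)
  qed
  finally have "real (?m - 1) * (\<Sum>k<?m. ?A k) \<le> real (card (perms n)) * L\<^sup>2"
    by (simp add: power2_eq_square)
  moreover have "(\<Sum>s\<in>perms n. adjacent_triangle_hits n t s) = (\<Sum>k<?m. ?A k)"
    unfolding adjacent_triangle_hits_def by (rule sum.swap)
  ultimately show ?thesis using m2 by (simp add: field_simps)
qed

lemma adjacent_triangle_hits_bound:
  assumes fast: "probes_below n T L" and n1: "1 \<le> n" and m2: "2 \<le> num_triangles n"
  shows "(\<Sum>s\<in>perms n. measure_pmf.expectation T (\<lambda>t. adjacent_triangle_hits n t s))
    \<le> real (card (perms n)) * L\<^sup>2 / real (num_triangles n - 1)"
proof -
  have int: "integrable (measure_pmf T) (\<lambda>t. adjacent_triangle_hits n t s)" for s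
    unfolding adjacent_triangle_hits_def by (intro Bochner_Integration.integrable_sum integrable_of_bool_pmf)
  have "(\<Sum>s\<in>perms n. measure_pmf.expectation T (\<lambda>t. adjacent_triangle_hits n t s))
      = measure_pmf.expectation T (\<lambda>t. \<Sum>s\<in>perms n. adjacent_triangle_hits n t s)"
    by (rule Bochner_Integration.integral_sum[symmetric]) (rule int)
  also have "\<dots> \<le> real (card (perms n)) * L\<^sup>2 / real (num_triangles n - 1)"
  proof (rule expectation_le_pointwise)
    show "integrable (measure_pmf T) (\<lambda>t. \<Sum>s\<in>perms n. adjacent_triangle_hits n t s)"
      by (intro Bochner_Integration.integrable_sum int)
    fix t assume "t \<in> set_pmf T"
    then show "(\<Sum>s\<in>perms n. adjacent_triangle_hits n t s) \<le> real (card (perms n)) * L\<^sup>2 / real (num_triangles n - 1)"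
      by (rule sum_adjacent_triangle_hits_le[OF fast n1 m2])
  qed
  finally show ?thesis .
qed


section \<open>The lower bound\<close>

lemma tester_rejects_tri_graph:
  assumes tester: "is_tester 2 n (3/4) (1/3) T" and "4 \<le> n" "s permutes {1..n}"
  shows "3/4 \<le> measure_pmf.expectation T (\<lambda>t. of_bool (snd (run t (tri_graph n s)) = False) :: real)"
proof -
  have "valid_graph 2 n (tri_graph n s)" using assms(2,3) by (intro valid_tri_graph) auto
  moreover have "far 2 n (1/3) (tri_graph n s)" by (rule far_tri_graph[OF assms(2,3)])
  ultimately have "3/4 \<le> measure_pmf.prob (tester_output T (tri_graph n s)) {False}"
    using tester unfolding is_tester_def by blast
  then show ?thesis unfolding prob_tester_output .
qed

lemma tester_rejects_ham_graph:
  assumes tester: "is_tester 2 n (3/4) (1/3) T" and "3 \<le> n" "s permutes {1..n}"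
  shows "measure_pmf.expectation T (\<lambda>t. of_bool (snd (run t (ham_graph n s)) = False) :: real) \<le> 1/4"
proof -
  have "in_P 2 n (ham_graph n s)" by (rule in_P_ham_graph[OF assms(2,3)])
  then have "3/4 \<le> measure_pmf.prob (tester_output T (ham_graph n s)) {True}"
    using tester unfolding is_tester_def in_P_def by blast
  then have accept: "3/4 \<le> measure_pmf.expectation T (\<lambda>t. of_bool (snd (run t (ham_graph n s)) = True) :: real)"
    unfolding prob_tester_output .
  have "measure_pmf.expectation T (\<lambda>t. of_bool (snd (run t (ham_graph n s)) = False) :: real)
      = measure_pmf.expectation T (\<lambda>t. 1 - of_bool (snd (run t (ham_graph n s)) = True))"
    by (rule Bochner_Integration.integral_cong) auto
  also have "\<dots> = 1 - measure_pmf.expectation T (\<lambda>t. of_bool (snd (run t (ham_graph n s)) = True))"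
    by (subst Bochner_Integration.integral_diff) (auto intro: integrable_of_bool_pmf)
  finally show ?thesis using accept by simp
qed

abbreviation hits :: "nat \<Rightarrow> qtree \<Rightarrow> (nat \<Rightarrow> nat) \<Rightarrow> real" where
  "hits n t s \<equiv> isolated_hits n t s + same_triangle_hits n t s + adjacent_triangle_hits n t s"

text \<open>For a fixed coin outcome t, runs on triangle graphs either break the coupling or are
matched with runs on Hamiltonian cycles that give the same answer.\<close>
lemma sum_rejections_le:
  assumes n1: "1 \<le> n" and m3: "3 \<le> num_triangles n"
  shows "(\<Sum>s\<in>perms n. of_bool (snd (run t (tri_graph n s)) = False) :: real)
    \<le> (\<Sum>s\<in>perms n. of_bool (snd (run t (ham_graph n s)) = False) + hits n t s)"
proof -
  let ?good = "\<lambda>s. well_spread n (probed_positions n t s)"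
  have "(\<Sum>s\<in>perms n. of_bool (snd (run t (tri_graph n s)) = False) :: real)
      \<le> (\<Sum>s\<in>perms n. of_bool (snd (run t (tri_graph n s)) = False \<and> ?good s) + of_bool (\<not> ?good s))"
    by (rule sum_mono) auto
  also have "\<dots> = real (card {s \<in> perms n. snd (run t (tri_graph n s)) = False \<and> ?good s})
      + (\<Sum>s\<in>perms n. of_bool (\<not> ?good s))"
    by (simp add: sum.distrib finite_perms Int_def)
  also have "\<dots> \<le> real (card {s \<in> perms n. snd (run t (ham_graph n s)) = False}) + (\<Sum>s\<in>perms n. hits n t s)"
  proof (rule add_mono)
    show "real (card {s \<in> perms n. snd (run t (tri_graph n s)) = False \<and> ?good s})
        \<le> real (card {s \<in> perms n. snd (run t (ham_graph n s)) = False})"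
      unfolding of_nat_le_iff by (rule card_well_spread_output_le[OF n1 m3])
    show "(\<Sum>s\<in>perms n. of_bool (\<not> ?good s)) \<le> (\<Sum>s\<in>perms n. hits n t s)"
      using not_well_spread_hits[OF m3] hits_nonneg by (intro sum_mono) (simp add: add_nonneg_nonneg)
  qed
  also have "\<dots> = (\<Sum>s\<in>perms n. of_bool (snd (run t (ham_graph n s)) = False) + hits n t s)"
    by (simp add: sum.distrib finite_perms Int_def)
  finally show ?thesis .
qed

text \<open>Averaged over a uniformly random s, the tester rejects triangle graphs with probability at
least 3/4 and Hamiltonian cycles with probability at most 1/4, and only the bad events can account
for the difference.\<close>
lemma expected_hits_lower_bound:
  assumes tester: "is_tester 2 n (3/4) (1/3) T" and m3: "3 \<le> num_triangles n"
  shows "real (card (perms n)) / 2 \<le> (\<Sum>s\<in>perms n. measure_pmf.expectation T (\<lambda>t. isolated_hits n t s))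
    + (\<Sum>s\<in>perms n. measure_pmf.expectation T (\<lambda>t. same_triangle_hits n t s))
    + (\<Sum>s\<in>perms n. measure_pmf.expectation T (\<lambda>t. adjacent_triangle_hits n t s))"
proof -
  let ?N = "real (card (perms n))" and ?E = "measure_pmf.expectation T :: (qtree \<Rightarrow> real) \<Rightarrow> real"
  have n1: "1 \<le> n" using m3 unfolding num_triangles_def by linarith
  have n4: "4 \<le> n" using m3 three_num_triangles_less[OF n1] by linarith
  have int: "integrable (measure_pmf T) (\<lambda>t. isolated_hits n t s)"
    "integrable (measure_pmf T) (\<lambda>t. same_triangle_hits n t s)"
    "integrable (measure_pmf T) (\<lambda>t. adjacent_triangle_hits n t s)" for s
    unfolding isolated_hits_def same_triangle_hits_def adjacent_triangle_hits_def
    by (intro Bochner_Integration.integrable_sum integrable_of_bool_pmf)+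
  have rejects_tri: "3/4 * ?N \<le> (\<Sum>s\<in>perms n. ?E (\<lambda>t. of_bool (snd (run t (tri_graph n s)) = False)))"
  proof -
    have "(\<Sum>s\<in>perms n. 3/4 :: real) \<le> (\<Sum>s\<in>perms n. ?E (\<lambda>t. of_bool (snd (run t (tri_graph n s)) = False)))"
      by (rule sum_mono) (use tester_rejects_tri_graph[OF tester n4] in \<open>simp add: perms_def\<close>)
    then show ?thesis by simp
  qed
  have accepts_ham: "(\<Sum>s\<in>perms n. ?E (\<lambda>t. of_bool (snd (run t (ham_graph n s)) = False))) \<le> ?N / 4"
  proof -
    have "(\<Sum>s\<in>perms n. ?E (\<lambda>t. of_bool (snd (run t (ham_graph n s)) = False))) \<le> (\<Sum>s\<in>perms n. 1/4 :: real)"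
      by (rule sum_mono) (use tester_rejects_ham_graph[OF tester] n4 in \<open>simp add: perms_def\<close>)
    then show ?thesis by simp
  qed
  have linear: "?E (\<lambda>t. of_bool (snd (run t (ham_graph n s)) = False) + hits n t s)
      = ?E (\<lambda>t. of_bool (snd (run t (ham_graph n s)) = False))
        + ?E (\<lambda>t. isolated_hits n t s) + ?E (\<lambda>t. same_triangle_hits n t s) + ?E (\<lambda>t. adjacent_triangle_hits n t s)" for s
    by (simp add: Bochner_Integration.integral_add Bochner_Integration.integrable_add integrable_of_bool_pmf int)
  note rejects_tri
  also have "(\<Sum>s\<in>perms n. ?E (\<lambda>t. of_bool (snd (run t (tri_graph n s)) = False)))
      = ?E (\<lambda>t. \<Sum>s\<in>perms n. of_bool (snd (run t (tri_graph n s)) = False))"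
    by (rule expectation_sum_of_bool[symmetric])
  also have "\<dots> \<le> ?E (\<lambda>t. \<Sum>s\<in>perms n. of_bool (snd (run t (ham_graph n s)) = False) + hits n t s)"
    by (intro integral_mono sum_rejections_le[OF n1 m3] Bochner_Integration.integrable_sum
        Bochner_Integration.integrable_add integrable_of_bool_pmf int)
  also have "\<dots> = (\<Sum>s\<in>perms n. ?E (\<lambda>t. of_bool (snd (run t (ham_graph n s)) = False) + hits n t s))"
    by (intro Bochner_Integration.integral_sum Bochner_Integration.integrable_add integrable_of_bool_pmf int)
  also have "\<dots> = (\<Sum>s\<in>perms n. ?E (\<lambda>t. of_bool (snd (run t (ham_graph n s)) = False)))
      + (\<Sum>s\<in>perms n. ?E (\<lambda>t. isolated_hits n t s)) + (\<Sum>s\<in>perms n. ?E (\<lambda>t. same_triangle_hits n t s))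
      + (\<Sum>s\<in>perms n. ?E (\<lambda>t. adjacent_triangle_hits n t s))"
    unfolding linear by (simp only: sum.distrib)
  finally show ?thesis using accepts_ham by linarith
qed

lemma main_inequality:
  assumes DO: "diff_oblivious 2 n \<epsilon> \<delta> T" "0 \<le> \<epsilon>" "0 \<le> \<delta>" and tester: "is_tester 2 n (3/4) (1/3) T"
    and fast: "probes_below n T L" and m3: "3 \<le> num_triangles n"
  shows "1/2 \<le> real (n - 3 * num_triangles n) * (exp (2 * \<epsilon>) * L / real (3 * num_triangles n) + 2 * exp (2 * \<epsilon>) * \<delta>)
     + exp (4 * \<epsilon>) * (2 * L\<^sup>2) / real (3 * num_triangles n - 3)
     + real (3 * num_triangles n) * (4 * exp (4 * \<epsilon>) * \<delta>)
     + L\<^sup>2 / real (num_triangles n - 1)"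
proof -
  let ?N = "real (card (perms n))"
  have n1: "1 \<le> n" using m3 unfolding num_triangles_def by linarith
  have m: "1 \<le> num_triangles n" "2 \<le> num_triangles n" using m3 by simp_all
  have N0: "0 < ?N" using finite_perms[of n] permutes_id[of "{1..n}"] unfolding perms_def
    by (metis card_gt_0_iff empty_iff mem_Collect_eq of_nat_0_less_iff)
  have "?N / 2 \<le> real (n - 3 * num_triangles n)
        * (exp (2 * \<epsilon>) * (?N * L) / real (3 * num_triangles n) + ?N * (2 * exp (2 * \<epsilon>) * \<delta>))
      + (exp (4 * \<epsilon>) * (?N * (2 * L\<^sup>2)) / real (3 * num_triangles n - 3)
         + real (3 * num_triangles n) * (?N * (4 * exp (4 * \<epsilon>) * \<delta>)))
      + ?N * L\<^sup>2 / real (num_triangles n - 1)"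
    by (rule order_trans[OF expected_hits_lower_bound[OF tester m3]],
        intro add_mono isolated_hits_bound[OF DO n1 m(1) fast] same_triangle_hits_bound[OF DO n1 m(2) fast]
        adjacent_triangle_hits_bound[OF fast n1 m(2)])
  then have "?N * (1/2) \<le> ?N * (real (n - 3 * num_triangles n) * (exp (2 * \<epsilon>) * L / real (3 * num_triangles n)
      + 2 * exp (2 * \<epsilon>) * \<delta>) + exp (4 * \<epsilon>) * (2 * L\<^sup>2) / real (3 * num_triangles n - 3)
      + real (3 * num_triangles n) * (4 * exp (4 * \<epsilon>) * \<delta>) + L\<^sup>2 / real (num_triangles n - 1))"
    by (simp add: algebra_simps)
  then show ?thesis using N0 by (simp only: mult_le_cancel_left_pos)
qed


lemma sqrt_le_tenth:
  fixes x :: real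
  assumes "100 \<le> x"
  shows "sqrt x \<le> x / 10"
proof -
  have "10 \<le> sqrt x" using assms real_sqrt_le_iff[of 100 x] by simp
  then have "10 * sqrt x \<le> sqrt x * sqrt x" using assms by (intro mult_right_mono) auto
  then show ?thesis using assms by simp
qed

lemma failure_bound_lt_half:
  fixes E2 E4 \<delta> L m r nr :: real
  assumes m: "133 \<le> m" and nr: "nr = 3 * m + r" and r: "1 \<le> r" "r \<le> 3"
    and E2: "1 \<le> E2" and E4: "E4 = E2 * E2" and \<delta>: "0 \<le> \<delta>" and small: "E4 * \<delta> < 1 / (16 * nr)"
    and L: "L = 1/16 * sqrt nr / E2"
  shows "r * (E2 * L / (3 * m) + 2 * E2 * \<delta>) + E4 * (2 * L\<^sup>2) / (3 * m - 3)
    + 3 * m * (4 * E4 * \<delta>) + L\<^sup>2 / (m - 1) < 1/2"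
proof -
  have nr0: "0 < nr" using nr m r by linarith
  have E41: "1 \<le> E4" using E2 mult_mono[of 1 E2 1 E2] unfolding E4 by simp
  have EL: "E2 * L = 1/16 * sqrt nr" using L E2 by simp
  have L2: "E4 * L\<^sup>2 = nr / 256"
  proof -
    have "E4 * L\<^sup>2 = (E2 * L)\<^sup>2" unfolding E4 by (simp add: power2_eq_square)
    also have "\<dots> = nr / 256" unfolding EL using nr0 by (simp add: power_mult_distrib power_divide)
    finally show ?thesis .
  qed
  have L2b: "L\<^sup>2 \<le> nr / 256" using L2 E41 mult_right_mono[OF E41, of "L\<^sup>2"] by simp
  have sqrt_le: "sqrt nr \<le> nr / 10" using nr m r by (intro sqrt_le_tenth) simp
  have t1: "r * (E2 * L / (3 * m)) \<le> 1/40"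
  proof -
    have "r * (E2 * L / (3 * m)) = r * sqrt nr / (48 * m)" unfolding EL by simp
    also have "\<dots> \<le> 3 * (nr / 10) / (48 * m)"
      using r sqrt_le m nr0 by (intro divide_right_mono mult_mono) auto
    also have "\<dots> \<le> 1/40" using nr r m by (simp add: field_simps)
    finally show ?thesis .
  qed
  have t2: "E4 * (2 * L\<^sup>2) / (3 * m - 3) \<le> 1/64"
    using L2 nr r m by (simp add: field_simps)
  have t3: "L\<^sup>2 / (m - 1) \<le> 1/64"
  proof -
    have "L\<^sup>2 / (m - 1) \<le> (nr / 256) / (m - 1)" using L2b m by (intro divide_right_mono) auto
    also have "\<dots> \<le> 1/64" using nr r m by (simp add: field_simps)
    finally show ?thesis .
  qed
  have t4: "r * (2 * E2 * \<delta>) + 3 * m * (4 * E4 * \<delta>) < 1/4"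
  proof -
    have "E2 \<le> E4" using E2 mult_left_mono[OF E2, of E2] unfolding E4 by simp
    then have "r * E2 * \<delta> \<le> r * E4 * \<delta>" using r \<delta> by (simp add: mult_left_mono mult_right_mono)
    moreover have "0 \<le> r * E4 * \<delta>" using r E41 \<delta> by simp
    moreover have "r * (2 * E2 * \<delta>) = 2 * (r * E2 * \<delta>)"
      "4 * nr * (E4 * \<delta>) = 4 * (r * E4 * \<delta>) + 3 * m * (4 * E4 * \<delta>)"
      unfolding nr by (simp_all add: algebra_simps)
    ultimately have "r * (2 * E2 * \<delta>) + 3 * m * (4 * E4 * \<delta>) \<le> 4 * nr * (E4 * \<delta>)" by linarith
    also have "\<dots> < 4 * nr * (1 / (16 * nr))" using small nr0 by (intro mult_strict_left_mono) auto
    also have "\<dots> = 1/4" using nr0 by simp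
    finally show ?thesis .
  qed
  show ?thesis using t1 t2 t3 t4 by (simp add: algebra_simps)
qed

lemma probe_lower_bound:
  assumes n: "400 \<le> n" and \<epsilon>: "0 < \<epsilon>" and \<delta>: "0 < \<delta>" and small: "exp (4 * \<epsilon>) * \<delta> < 1 / (16 * real n)"
    and DO: "diff_oblivious 2 n \<epsilon> \<delta> T" and tester: "is_tester 2 n (3/4) (1/3) T"
  shows "\<exists>f. valid_graph 2 n f \<and> (\<exists>t\<in>set_pmf T. real (num_probes t f) \<ge> 1/16 * sqrt (real n) / exp (2 * \<epsilon>))"
proof (rule ccontr)
  define L where "L = 1/16 * sqrt (real n) / exp (2 * \<epsilon>)"
  assume "\<not> ?thesis"
  then have fast: "probes_below n T L" unfolding probes_below_def L_def by (auto simp: not_le)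
  define m r where "m = real (num_triangles n)" and "r = real (n - 3 * num_triangles n)"
  have m133: "133 \<le> num_triangles n" using n unfolding num_triangles_def by linarith
  then have m3: "3 \<le> num_triangles n" and m: "133 \<le> m" unfolding m_def by simp_all
  have less: "3 * num_triangles n < n" and "n \<le> 3 * num_triangles n + 3"
    using three_num_triangles_less[of n] n unfolding num_triangles_def by linarith+
  then have n_eq: "real n = 3 * m + r" and r: "1 \<le> r" "r \<le> 3" unfolding m_def r_def by linarith+
  have conv: "real (3 * num_triangles n) = 3 * m" "real (3 * num_triangles n - 3) = 3 * m - 3"
    "real (num_triangles n - 1) = m - 1" using m3 unfolding m_def by (simp_all add: of_nat_diff)
  have E4: "exp (4 * \<epsilon>) = exp (2 * \<epsilon>) * exp (2 * \<epsilon>)" by (simp add: mult_exp_exp)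
  have "1/2 \<le> r * (exp (2 * \<epsilon>) * L / (3 * m) + 2 * exp (2 * \<epsilon>) * \<delta>)
     + exp (4 * \<epsilon>) * (2 * L\<^sup>2) / (3 * m - 3) + 3 * m * (4 * exp (4 * \<epsilon>) * \<delta>) + L\<^sup>2 / (m - 1)"
    using main_inequality[OF DO less_imp_le[OF \<epsilon>] less_imp_le[OF \<delta>] tester fast m3]
    unfolding conv r_def[symmetric] .
  moreover have "\<dots> < 1/2"
    by (rule failure_bound_lt_half[OF m n_eq r _ E4 less_imp_le[OF \<delta>]])
      (use \<epsilon> small L_def n_eq in simp_all)
  ultimately show False by linarith
qed

theorem theorem2:
  shows "\<exists>c>0. \<exists>N::nat. \<forall>n\<ge>N. \<forall>(\<epsilon>::real) (\<delta>::real) (T::qtree pmf).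
           \<epsilon> > 0 \<longrightarrow> \<delta> > 0 \<longrightarrow> exp (4 * \<epsilon>) * \<delta> < 1 / (16 * real n) \<longrightarrow>
           diff_oblivious 2 n \<epsilon> \<delta> T \<longrightarrow> is_tester 2 n (3/4) (1/3) T \<longrightarrow>
           (\<exists>f. valid_graph 2 n f \<and>
              (\<exists>t\<in>set_pmf T. real (num_probes t f) \<ge> c * sqrt (real n) / exp (2 * \<epsilon>)))"
  using probe_lower_bound by (intro exI[of _ "1/16"] exI[of _ "400::nat"] conjI allI impI) simp_all

end
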